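(* Let $T\ge1$ be an integer and run the randomized incremental proximal method from a deterministic $x_0\in\mathbb{R}^n$ with step size $\tau=\frac{1}{5L\sqrt{T}}$: \[ x_{t+1}=\operatorname{prox}_{\tau m g_{j_t}}\bigl(x_t-\tau\nabla f_{i_t}(x_t)\bigr),\quad t=0,\dots,T. \] Then \[ \mathbb{E}\left[h(x_{T+1})-h^*\right]\le\frac{10}{\sqrt{T}}\left[LD_*^2+\frac{1}{\sqrt{T}}\bigl(h(x_0)-h^*\bigr)+\frac{\sigma_*^2+4m^2L_g^2}{L}\Bigl(\frac1T+4\ln(T+1)\Bigr)\right]. \]
   Context: Setting. Let $D$ be a probability distribution on an index set, and for each index $i$ let $f_i:\mathbb{R}^n\to\mathbb{R}$ be convex and differentiable with $L$-Lipschitz gradient ($L>0$). Let $f(x)=\mathbb{E}_{i\sim D}[f_i(x)]$ with $\mathbb{E}_{i\sim D}[\nabla f_i(x)]=\nabla f(x)$ for all $x$. Let $g=\sum_{j=1}^m g_j$ where each $g_j:\mathbb{R}^n\to\mathbb{R}$ is proper, convex, lower semicontinuous and $L_g$-Lipschitz ($|g_j(x)-g_j(y)|\le L_g\|x-y\|$). Let $h=f+g$, assume $X^*=\arg\min h$ is nonempty, $h^*=\min h$, $D_*^2=\min_{x^*\in X^*}\|x^*-x_0\|^2$, and $\sigma_*^2:=\mathbb{E}_{i\sim D}\|\nabla f_i(x^* )\|^2<\infty$ for some $x^*\in X^*$. For $\lambda>0$, $\operatorname{prox}_{\lambda \phi}(y)=\arg\min_z\{\lambda\phi(z)+\tfrac12\|y-z\|^2\}$.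 At each iteration $i_t$ is drawn from $D$ and $j_t$ uniformly from $\{1,\dots,m\}$, independently of each other and of $x_0,\dots,x_t$ (i.i.d. across iterations). *)

theory Defs
  imports "HOL-Probability.Probability"
begin

definition prox :: "real \<Rightarrow> ('a::real_normed_vector \<Rightarrow> real) \<Rightarrow> 'a \<Rightarrow> 'a" where
  "prox lam \<phi> y =
     (SOME z. \<forall>w. lam * \<phi> z + (norm (y - z))^2 / 2 \<le> lam * \<phi> w + (norm (y - w))^2 / 2)"

definition lower_semicontinuous :: "('a::topological_space \<Rightarrow> real) \<Rightarrow> bool" where
  "lower_semicontinuous \<phi> \<longleftrightarrow> (\<forall>x. \<forall>e>0. \<forall>\<^sub>F y in at x. \<phi> x - e < \<phi> y)"

primrec rip_iter ::
  "'a::real_inner \<Rightarrow> real \<Rightarrow> nat \<Rightarrow> ('i \<Rightarrow> 'a \<Rightarrow> 'a) \<Rightarrow> (nat \<Rightarrow> 'a \<Rightarrow> real)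
   \<Rightarrow> (nat \<Rightarrow> 'i) \<Rightarrow> (nat \<Rightarrow> nat) \<Rightarrow> nat \<Rightarrow> 'a" where
  "rip_iter x0 \<tau> m gradf g I J 0 = x0"
| "rip_iter x0 \<tau> m gradf g I J (Suc t) =
     prox (\<tau> * real m) (g (J t))
       (rip_iter x0 \<tau> m gradf g I J t - \<tau> *\<^sub>R gradf (I t) (rip_iter x0 \<tau> m gradf g I J t))"

end

theory Submission
  imports Defs "HOL-Analysis.Harmonic_Numbers"
begin

text \<open>
  For every point u, one step of the method satisfies, in expectation over the sample (i_t, j_t),

    2 tau E (h x_{t+1} - h_* ) + E |x_{t+1} - u|^2
      <= |x_t - u|^2 + 2 tau (h u - h_* ) + 8 tau^2 L (h x_t - h_* ) + tau^2 (4 sigma_*^2 + 16 m^2 L_g^2):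

  the three-point inequality of the prox handles g_{j_t}, the error of replacing sum_j g_j by
  m g_{j_t} averages out over j_t up to a Lipschitz term, and cocoercivity of the gradients of
  the f_i bounds the variance of the stochastic gradient at x by 4 L (h x - h_* ) + 2 sigma_*^2.

  For the last iterate, u is taken to be the running average z_t of a minimizer and the iterates,
  with weights w_s that increase to w_T = 1. Convexity of h then makes the potential
  sum_s a_{t,s} (h x_s - h_* ) + w_t (2 tau (h x_{t+1} - h_* ) + |x_{t+1} - z_t|^2) grow in
  expectation by at most tau^2 w_t (4 sigma_*^2 + 16 m^2 L_g^2) per step, and at t = T it dominates
  2 tau (h x_{T+1} - h_* ). For tau = 1/(5 L sqrt T) the weights satisfy w_{T-j} <= 3/(j+1),
  because the harmonic number H_j is at most 5/4 sqrt j, so their sum is at most 3 (1 + ln (T+1)).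

  Expectations are computed on the product of T + 1 copies of the sample distribution, which by
  independence is the joint law of the sampled indices.
\<close>

section \<open>Smooth convex functions\<close>

lemma nonpos_if_le_small_multiples:
  fixes A B :: real
  assumes "\<And>s. 0 < s \<Longrightarrow> s \<le> 1 \<Longrightarrow> A \<le> s * B"
  shows "A \<le> 0"
proof (rule ccontr)
  assume "\<not> A \<le> 0"
  hence A: "A > 0" by simp
  show False
  proof (cases "B \<le> 0")
    case True
    thus False using assms[of 1] A by simp
  next
    case False
    define s where "s = min 1 (A / (2 * B))"
    have s: "0 < s" "s \<le> 1" using A False by (auto simp: s_def)
    have "s * B \<le> A / (2 * B) * B" using False by (intro mult_right_mono) (auto simp: s_def)
    also have "\<dots> = A / 2" using False by simp
    finally show False using assms[OF s] A by simp
  qed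
qed

lemma has_real_derivative_along_line:
  fixes f :: "'a::real_inner \<Rightarrow> real"
  assumes "(f has_derivative (\<lambda>v. g \<bullet> v)) (at (x + s *\<^sub>R d))"
  shows "((\<lambda>s. f (x + s *\<^sub>R d)) has_real_derivative g \<bullet> d) (at s)"
proof -
  have "((\<lambda>s. x + s *\<^sub>R d) has_derivative (\<lambda>r. r *\<^sub>R d)) (at s)"
    by (auto intro!: derivative_eq_intros)
  from has_derivative_compose[OF this assms]
  show ?thesis unfolding has_field_derivative_def
    by (rule has_derivative_eq_rhs) (auto simp: fun_eq_iff algebra_simps)
qed

lemma convex_on_along_line:
  fixes f :: "'a::real_vector \<Rightarrow> real"
  assumes "convex_on UNIV f"
  shows "convex_on UNIV (\<lambda>s::real. f (x + s *\<^sub>R d))"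
proof (rule convex_onI)
  fix t a b :: real assume t: "0 < t" "t < 1"
  have "x + ((1 - t) * a + t * b) *\<^sub>R d = (1 - t) *\<^sub>R (x + a *\<^sub>R d) + t *\<^sub>R (x + b *\<^sub>R d)"
    by (simp add: algebra_simps)
  also have "f \<dots> \<le> (1 - t) * f (x + a *\<^sub>R d) + t * f (x + b *\<^sub>R d)"
    using t by (intro convex_onD[OF assms]) auto
  finally show "f (x + ((1 - t) *\<^sub>R a + t *\<^sub>R b) *\<^sub>R d) \<le> (1 - t) * f (x + a *\<^sub>R d) + t * f (x + b *\<^sub>R d)"
    by simp
qed simp

lemma convex_on_gradient_inequality:
  fixes f :: "'a::real_inner \<Rightarrow> real"
  assumes "convex_on UNIV f" and "(f has_derivative (\<lambda>v. g \<bullet> v)) (at x)"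
  shows "f x + g \<bullet> (z - x) \<le> f z"
proof -
  have "((\<lambda>s. f (x + s *\<^sub>R (z - x))) has_real_derivative g \<bullet> (z - x)) (at 0)"
    using assms(2) by (intro has_real_derivative_along_line) simp
  from convex_on_imp_above_tangent[OF convex_on_along_line[OF assms(1)] _ _ _ this, of 1]
  show ?thesis by simp
qed

lemma lipschitz_gradient_upper_bound:
  fixes f :: "'a::real_inner \<Rightarrow> real"
  assumes der: "\<And>x. (f has_derivative (\<lambda>v. G x \<bullet> v)) (at x)"
    and lip: "\<And>x y. norm (G x - G y) \<le> L * norm (x - y)"
  shows "f y \<le> f x + G x \<bullet> (y - x) + L / 2 * (norm (y - x))\<^sup>2"
proof -
  define d where "d = y - x"
  define \<phi> where "\<phi> s = f (x + s *\<^sub>R d) - s * (G x \<bullet> d) - L / 2 * s\<^sup>2 * (norm d)\<^sup>2" for s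
  have "\<phi> 1 \<le> \<phi> 0"
  proof (rule DERIV_nonpos_imp_nonincreasing[where f = \<phi>])
    fix s :: real assume s: "0 \<le> s" "s \<le> 1"
    have "(\<phi> has_real_derivative (G (x + s *\<^sub>R d) \<bullet> d - G x \<bullet> d - L * s * (norm d)\<^sup>2)) (at s)"
      unfolding \<phi>_def by (rule has_real_derivative_along_line[OF der] derivative_eq_intros refl | simp)+
    moreover have "(G (x + s *\<^sub>R d) - G x) \<bullet> d \<le> L * s * (norm d)\<^sup>2"
    proof -
      have "(G (x + s *\<^sub>R d) - G x) \<bullet> d \<le> norm (G (x + s *\<^sub>R d) - G x) * norm d"
        by (rule norm_cauchy_schwarz)
      also have "\<dots> \<le> (L * norm (s *\<^sub>R d)) * norm d"
        using lip[of "x + s *\<^sub>R d" x] by (intro mult_right_mono) auto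
      also have "\<dots> = L * s * (norm d)\<^sup>2" using s by (simp add: power2_eq_square)
      finally show ?thesis .
    qed
    ultimately show "\<exists>y. (\<phi> has_real_derivative y) (at s) \<and> y \<le> 0"
      by (auto simp: inner_diff_left)
  qed simp
  thus ?thesis by (simp add: \<phi>_def d_def)
qed

lemma lipschitz_gradient_cocoercive:
  fixes f :: "'a::real_inner \<Rightarrow> real"
  assumes cvx: "convex_on UNIV f"
    and der: "\<And>x. (f has_derivative (\<lambda>v. G x \<bullet> v)) (at x)"
    and lip: "\<And>x y. norm (G x - G y) \<le> L * norm (x - y)"
    and L: "L > 0"
  shows "(norm (G y - G x))\<^sup>2 \<le> 2 * L * (f y - f x - G x \<bullet> (y - x))"
proof -
  \<comment> \<open>The tilted function \<open>\<phi>\<close> is minimal at \<open>x\<close>; one gradient step from \<open>y\<close> decreases it by \<open>\<parallel>\<nabla>\<phi> y\<parallel>\<^sup>2/(2L)\<close>.\<close>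
  define \<phi> where "\<phi> z = f z - G x \<bullet> z" for z
  define H where "H z = G z - G x" for z
  have der_\<phi>: "(\<phi> has_derivative (\<lambda>v. H z \<bullet> v)) (at z)" for z
    unfolding \<phi>_def H_def
    by (rule has_derivative_eq_rhs, (rule der derivative_eq_intros)+) (auto simp: inner_diff_left)
  have lip_H: "norm (H a - H b) \<le> L * norm (a - b)" for a b
    using lip[of a b] by (simp add: H_def)
  have "\<phi> x \<le> \<phi> z" for z
    using convex_on_gradient_inequality[OF cvx der[of x], of z] by (simp add: \<phi>_def inner_diff_right)
  also have "\<phi> z \<le> \<phi> y + H y \<bullet> (z - y) + L / 2 * (norm (z - y))\<^sup>2" for z
    by (rule lipschitz_gradient_upper_bound[OF der_\<phi> lip_H])
  finally have "\<phi> x \<le> \<phi> y + H y \<bullet> (- (1 / L) *\<^sub>R H y) + L / 2 * (norm (- (1 / L) *\<^sub>R H y))\<^sup>2"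
    by (metis add_diff_cancel_left')
  also have "\<dots> = \<phi> y - (norm (H y))\<^sup>2 / (2 * L)"
    using L by (simp add: dot_square_norm power_mult_distrib power2_eq_square field_simps)
  finally show ?thesis
    using L by (simp add: \<phi>_def H_def inner_diff_right field_simps)
qed

section \<open>The proximal operator\<close>

lemma prox_minimizer_exists:
  fixes \<phi> :: "'a::euclidean_space \<Rightarrow> real"
  assumes lip: "K-lipschitz_on UNIV \<phi>" and lam: "lam \<ge> 0"
  shows "\<exists>z. \<forall>w. lam * \<phi> z + (norm (y - z))\<^sup>2 / 2 \<le> lam * \<phi> w + (norm (y - w))\<^sup>2 / 2"
proof -
  \<comment> \<open>Outside the ball of radius \<open>2 lam K + 1\<close> around \<open>y\<close> the objective exceeds its value at \<open>y\<close>.\<close>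
  define \<Phi> where "\<Phi> z = lam * \<phi> z + (norm (y - z))\<^sup>2 / 2" for z
  define R where "R = 2 * lam * K + 1"
  have K: "K \<ge> 0" using lip by (rule lipschitz_on_nonneg)
  have cont: "continuous_on (cball y R) \<Phi>"
    unfolding \<Phi>_def using lipschitz_on_continuous_on[OF lip]
    by (intro continuous_intros) (auto intro: continuous_on_subset)
  have "R \<ge> 0" using K lam by (simp add: R_def)
  then obtain z where z: "z \<in> cball y R" "\<And>w. w \<in> cball y R \<Longrightarrow> \<Phi> z \<le> \<Phi> w"
    using continuous_attains_inf[OF compact_cball _ cont] by fastforce
  have "\<Phi> z \<le> \<Phi> w" for w
  proof (cases "w \<in> cball y R")
    case False
    hence far: "2 * lam * K \<le> norm (w - y)" by (simp add: R_def dist_norm norm_minus_commute)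
    have "\<phi> y - K * norm (w - y) \<le> \<phi> w"
      using lipschitz_onD[OF lip, of w y] by (simp add: dist_norm abs_le_iff)
    hence "lam * \<phi> y - lam * K * norm (w - y) \<le> lam * \<phi> w"
      using lam mult_left_mono by (fastforce simp: algebra_simps)
    moreover have "(2 * lam * K) * norm (w - y) \<le> norm (w - y) * norm (w - y)"
      using far by (intro mult_right_mono) auto
    ultimately have "\<Phi> y \<le> \<Phi> w" by (simp add: \<Phi>_def norm_minus_commute power2_eq_square)
    moreover have "\<Phi> z \<le> \<Phi> y" using z(2)[of y] \<open>R \<ge> 0\<close> by simp
    ultimately show ?thesis by simp
  qed (use z in blast)
  thus ?thesis unfolding \<Phi>_def by blast
qed

lemma prox_minimizes:
  fixes \<phi> :: "'a::euclidean_space \<Rightarrow> real"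
  assumes "K-lipschitz_on UNIV \<phi>" and "lam \<ge> 0"
  shows "lam * \<phi> (prox lam \<phi> y) + (norm (y - prox lam \<phi> y))\<^sup>2 / 2 \<le> lam * \<phi> w + (norm (y - w))\<^sup>2 / 2"
  using someI_ex[OF prox_minimizer_exists[OF assms, of y]] unfolding prox_def by blast

lemma prox_variational_inequality:
  fixes \<phi> :: "'a::euclidean_space \<Rightarrow> real"
  assumes lip: "K-lipschitz_on UNIV \<phi>" and lam: "lam \<ge> 0" and cvx: "convex_on UNIV \<phi>"
  shows "lam * (\<phi> (prox lam \<phi> y) - \<phi> w) \<le> (y - prox lam \<phi> y) \<bullet> (prox lam \<phi> y - w)"
proof -
  define z where "z = prox lam \<phi> y"
  have "lam * (\<phi> z - \<phi> w) - (y - z) \<bullet> (z - w) \<le> 0"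
  proof (rule nonpos_if_le_small_multiples[where B = "(norm (w - z))\<^sup>2 / 2"])
    fix s :: real assume s: "0 < s" "s \<le> 1"
    define zs where "zs = (1 - s) *\<^sub>R z + s *\<^sub>R w"
    have "lam * \<phi> z + (norm (y - z))\<^sup>2 / 2 \<le> lam * \<phi> zs + (norm (y - zs))\<^sup>2 / 2"
      unfolding z_def by (rule prox_minimizes[OF lip lam])
    moreover have "lam * \<phi> zs \<le> lam * ((1 - s) * \<phi> z + s * \<phi> w)"
      unfolding zs_def using s by (intro mult_left_mono[OF convex_onD[OF cvx]] lam) auto
    moreover have "y - zs = (y - z) - s *\<^sub>R (w - z)" by (simp add: zs_def algebra_simps)
    hence "(norm (y - zs))\<^sup>2 = (norm (y - z))\<^sup>2 - 2 * s * ((y - z) \<bullet> (w - z)) + s\<^sup>2 * (norm (w - z))\<^sup>2"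
      using dot_norm_neg[of "y - z" "s *\<^sub>R (w - z)"] by (simp only:) (simp add: power_mult_distrib)
    ultimately have "s * (lam * (\<phi> z - \<phi> w) - (y - z) \<bullet> (z - w)) \<le> s * (s * ((norm (w - z))\<^sup>2 / 2))"
      by (simp add: inner_diff_right algebra_simps power2_eq_square)
    thus "lam * (\<phi> z - \<phi> w) - (y - z) \<bullet> (z - w) \<le> s * ((norm (w - z))\<^sup>2 / 2)"
      using s by simp
  qed
  thus ?thesis by (simp add: z_def)
qed

lemma prox_three_point_inequality:
  fixes \<phi> :: "'a::euclidean_space \<Rightarrow> real"
  assumes "K-lipschitz_on UNIV \<phi>" and "lam \<ge> 0" and "convex_on UNIV \<phi>"
  shows "lam * \<phi> (prox lam \<phi> y) + (norm (y - prox lam \<phi> y))\<^sup>2 / 2 + (norm (prox lam \<phi> y - w))\<^sup>2 / 2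
           \<le> lam * \<phi> w + (norm (y - w))\<^sup>2 / 2"
proof -
  define z where "z = prox lam \<phi> y"
  have "lam * (\<phi> z - \<phi> w) \<le> (y - z) \<bullet> (z - w)"
    unfolding z_def by (rule prox_variational_inequality[OF assms])
  moreover have "(norm (y - w))\<^sup>2 = (norm (y - z))\<^sup>2 + (norm (z - w))\<^sup>2 + 2 * ((y - z) \<bullet> (z - w))"
    using dot_norm[of "y - z" "z - w"] by simp
  ultimately show ?thesis unfolding z_def[symmetric] by (simp add: algebra_simps)
qed

lemma prox_nonexpansive:
  fixes \<phi> :: "'a::euclidean_space \<Rightarrow> real"
  assumes "K-lipschitz_on UNIV \<phi>" and "lam \<ge> 0" and "convex_on UNIV \<phi>"
  shows "norm (prox lam \<phi> y1 - prox lam \<phi> y2) \<le> norm (y1 - y2)"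
proof -
  define z1 where "z1 = prox lam \<phi> y1"
  define z2 where "z2 = prox lam \<phi> y2"
  have "lam * (\<phi> z1 - \<phi> z2) \<le> (y1 - z1) \<bullet> (z1 - z2)" "lam * (\<phi> z2 - \<phi> z1) \<le> (y2 - z2) \<bullet> (z2 - z1)"
    unfolding z1_def z2_def by (rule prox_variational_inequality[OF assms])+
  moreover have "(y1 - z1) \<bullet> (z1 - z2) + (y2 - z2) \<bullet> (z2 - z1) = (y1 - y2) \<bullet> (z1 - z2) - (norm (z1 - z2))\<^sup>2"
    by (simp add: power2_norm_eq_inner inner_diff_left inner_diff_right algebra_simps)
  ultimately have "(norm (z1 - z2))\<^sup>2 \<le> (y1 - y2) \<bullet> (z1 - z2)" by (simp add: algebra_simps)
  also have "\<dots> \<le> norm (y1 - y2) * norm (z1 - z2)" by (rule norm_cauchy_schwarz)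
  finally have "norm (z1 - z2) * norm (z1 - z2) \<le> norm (y1 - y2) * norm (z1 - z2)"
    by (simp add: power2_eq_square)
  thus ?thesis
    unfolding z1_def[symmetric] z2_def[symmetric]
    by (cases "norm (z1 - z2) = 0") (auto simp: mult_le_cancel_right)
qed

lemma borel_measurable_prox:
  fixes \<phi> :: "'a::euclidean_space \<Rightarrow> real"
  assumes "K-lipschitz_on UNIV \<phi>" and "lam \<ge> 0" and "convex_on UNIV \<phi>"
  shows "prox lam \<phi> \<in> borel_measurable borel"
proof (intro borel_measurable_continuous_onI lipschitz_on_continuous_on)
  show "1-lipschitz_on UNIV (prox lam \<phi>)"
    using prox_nonexpansive[OF assms] by (auto simp: lipschitz_on_def dist_norm)
qed

lemma norm_diff_square: "(norm (a - b))\<^sup>2 = (norm a)\<^sup>2 - 2 * (a \<bullet> b) + (norm (b::'a::real_inner))\<^sup>2"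
  using dot_norm_neg[of a b] by simp

lemma prox_gradient_step_inequality:
  fixes \<phi> :: "'a::euclidean_space \<Rightarrow> real"
  assumes "K-lipschitz_on UNIV \<phi>" and "lam \<ge> 0" and "convex_on UNIV \<phi>"
    and x': "x' = prox lam \<phi> (x - \<tau> *\<^sub>R v)"
  shows "2 * (lam * \<phi> x') + (norm (x' - u))\<^sup>2
           \<le> 2 * (lam * \<phi> u) + (norm (x - u))\<^sup>2 - (norm (x' - x))\<^sup>2 - 2 * (\<tau> * (v \<bullet> (x' - u)))"
proof -
  have "lam * \<phi> x' + (norm ((x - \<tau> *\<^sub>R v) - x'))\<^sup>2 / 2 + (norm (x' - u))\<^sup>2 / 2
          \<le> lam * \<phi> u + (norm ((x - \<tau> *\<^sub>R v) - u))\<^sup>2 / 2"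
    unfolding x' by (rule prox_three_point_inequality[OF assms(1-3)])
  moreover have sq: "(norm ((x - \<tau> *\<^sub>R v) - w))\<^sup>2 = (norm (x - w))\<^sup>2 - 2 * (\<tau> * (v \<bullet> (x - w))) + \<tau>\<^sup>2 * (norm v)\<^sup>2" for w
    using norm_diff_square[of "x - w" "\<tau> *\<^sub>R v"]
    by (simp add: algebra_simps inner_commute power_mult_distrib)
  moreover have "\<tau> * (v \<bullet> (x - u)) - \<tau> * (v \<bullet> (x - x')) = \<tau> * (v \<bullet> (x' - u))"
    by (simp add: inner_diff_right algebra_simps)
  moreover have "(norm (x' - x))\<^sup>2 = (norm (x - x'))\<^sup>2" by (simp add: norm_minus_commute)
  ultimately show ?thesis using sq[of x'] sq[of u] by linarith
qed

section \<open>Probability\<close>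

lemma nn_integral_PiM_mono_coordinate:
  fixes Q :: "'b measure" and I :: "'i set"
  assumes Q: "prob_space Q" and fin: "finite I" and k: "k \<in> I"
    and f: "f \<in> borel_measurable (PiM I (\<lambda>_. Q))" and g: "g \<in> borel_measurable (PiM I (\<lambda>_. Q))"
    and g_indep: "\<And>\<xi> y. \<xi> \<in> space (PiM I (\<lambda>_. Q)) \<Longrightarrow> y \<in> space Q \<Longrightarrow> g (\<xi>(k := y)) = g \<xi>"
    and bound: "\<And>\<xi>. \<xi> \<in> space (PiM I (\<lambda>_. Q)) \<Longrightarrow> (\<integral>\<^sup>+y. f (\<xi>(k := y)) \<partial>Q) \<le> g \<xi>"
  shows "(\<integral>\<^sup>+\<xi>. f \<xi> \<partial>PiM I (\<lambda>_. Q)) \<le> (\<integral>\<^sup>+\<xi>. g \<xi> \<partial>PiM I (\<lambda>_. Q))"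
proof -
  interpret Q: prob_space Q by (rule Q)
  interpret product_sigma_finite "\<lambda>_::'i. Q"
    by (simp add: product_sigma_finite_def prob_space_imp_sigma_finite[OF Q])
  define J where "J = I - {k}"
  have I: "I = insert k J" and "k \<notin> J" "finite J" using k fin by (auto simp: J_def)
  obtain y0 where y0: "y0 \<in> space Q" using Q.not_empty by blast
  have upd: "\<xi>(k := y0) \<in> space (PiM I (\<lambda>_. Q))" if "\<xi> \<in> space (PiM J (\<lambda>_. Q))" for \<xi>
    using that y0 unfolding I space_PiM by (intro PiE_fun_upd) auto
  have "(\<integral>\<^sup>+\<xi>. f \<xi> \<partial>PiM I (\<lambda>_. Q)) = (\<integral>\<^sup>+\<xi>. (\<integral>\<^sup>+y. f (\<xi>(k := y)) \<partial>Q) \<partial>PiM J (\<lambda>_. Q))"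
    unfolding I by (rule product_nn_integral_insert) (use \<open>k \<notin> J\<close> \<open>finite J\<close> f I in simp_all)
  also have "\<dots> \<le> (\<integral>\<^sup>+\<xi>. g (\<xi>(k := y0)) \<partial>PiM J (\<lambda>_. Q))"
  proof (rule nn_integral_mono)
    fix \<xi> assume "\<xi> \<in> space (PiM J (\<lambda>_. Q))"
    from bound[OF upd[OF this]]
    show "(\<integral>\<^sup>+y. f (\<xi>(k := y)) \<partial>Q) \<le> g (\<xi>(k := y0))" by simp
  qed
  also have "\<dots> = (\<integral>\<^sup>+\<xi>. (\<integral>\<^sup>+y. g (\<xi>(k := y)) \<partial>Q) \<partial>PiM J (\<lambda>_. Q))"
  proof (rule nn_integral_cong)
    fix \<xi> assume \<xi>: "\<xi> \<in> space (PiM J (\<lambda>_. Q))"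
    have "(\<integral>\<^sup>+y. g (\<xi>(k := y)) \<partial>Q) = (\<integral>\<^sup>+y. g (\<xi>(k := y0)) \<partial>Q)"
      using g_indep[OF upd[OF \<xi>]] by (intro nn_integral_cong) simp
    thus "g (\<xi>(k := y0)) = (\<integral>\<^sup>+y. g (\<xi>(k := y)) \<partial>Q)" by (simp add: Q.emeasure_space_1)
  qed
  also have "\<dots> = (\<integral>\<^sup>+\<xi>. g \<xi> \<partial>PiM I (\<lambda>_. Q))"
    unfolding I by (rule product_nn_integral_insert[symmetric]) (use \<open>k \<notin> J\<close> \<open>finite J\<close> g I in simp_all)
  finally show ?thesis .
qed

lemma nn_integral_pmf_of_set_ennreal:
  assumes "finite A" and "A \<noteq> {}" and "\<And>x. x \<in> A \<Longrightarrow> 0 \<le> f x"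
  shows "(\<integral>\<^sup>+x. ennreal (f x) \<partial>measure_pmf (pmf_of_set A)) = ennreal ((\<Sum>x\<in>A. f x) / real (card A))"
  using assms by (simp add: nn_integral_pmf_of_set sum_ennreal divide_ennreal sum_nonneg card_gt_0_iff
      ennreal_of_nat_eq_real_of_nat)

lemma (in prob_space) nn_integral_indep_identically_distributed:
  assumes indep: "indep_vars (\<lambda>_. N) X I" and "I \<noteq> {}"
    and distr: "\<And>i. i \<in> I \<Longrightarrow> distr M N (X i) = N"
    and f: "f \<in> borel_measurable (PiM I (\<lambda>_. N))"
  shows "(\<integral>\<^sup>+\<xi>. f (\<lambda>i\<in>I. X i \<xi>) \<partial>M) = (\<integral>\<^sup>+\<xi>. f \<xi> \<partial>PiM I (\<lambda>_. N))"
proof -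
  have X: "\<And>i. i \<in> I \<Longrightarrow> X i \<in> measurable M N"
    using indep unfolding indep_vars_def by auto
  have \<Phi>: "(\<lambda>\<xi>. \<lambda>i\<in>I. X i \<xi>) \<in> measurable M (PiM I (\<lambda>_. N))"
    by (rule measurable_restrict) (rule X)
  have "distr M (PiM I (\<lambda>_. N)) (\<lambda>\<xi>. \<lambda>i\<in>I. X i \<xi>) = PiM I (\<lambda>i. distr M N (X i))"
    using indep indep_vars_iff_distr_eq_PiM'[OF \<open>I \<noteq> {}\<close> X] by simp
  also have "\<dots> = PiM I (\<lambda>_. N)" by (intro PiM_cong refl distr)
  finally have distr_PiM: "distr M (PiM I (\<lambda>_. N)) (\<lambda>\<xi>. \<lambda>i\<in>I. X i \<xi>) = PiM I (\<lambda>_. N)" .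
  show ?thesis
    using nn_integral_distr[OF \<Phi>, of f] f unfolding distr_PiM by simp
qed

lemma (in prob_space) integrable_norm_diff_expectation_square:
  fixes X :: "'a \<Rightarrow> 'v::euclidean_space"
  assumes "integrable M X" and "integrable M (\<lambda>i. (norm (X i))\<^sup>2)"
  shows "integrable M (\<lambda>i. (norm (X i - expectation X))\<^sup>2)"
  using assms by (simp add: norm_diff_square)

lemma (in prob_space) integral_norm_diff_expectation_square:
  fixes X :: "'a \<Rightarrow> 'v::euclidean_space"
  assumes "integrable M X" and "integrable M (\<lambda>i. (norm (X i))\<^sup>2)"
  shows "(\<integral>i. (norm (X i - expectation X))\<^sup>2 \<partial>M) = (\<integral>i. (norm (X i))\<^sup>2 \<partial>M) - (norm (expectation X))\<^sup>2"
  using assms by (simp add: norm_diff_square prob_space dot_square_norm)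

section \<open>Elementary estimates\<close>

lemma sqrt_add_sqrt_Suc_le: "sqrt (real n + 1) + sqrt (real n) \<le> 5/4 * (real n + 1)"
proof -
  consider "n = 0" | "n = 1" | "n \<ge> 2" by linarith
  thus ?thesis
  proof cases
    case 2
    have "sqrt 2 \<le> 3/2" by (rule real_le_lsqrt) (auto simp: power2_eq_square)
    thus ?thesis using 2 by simp
  next
    case 3
    define x where "x = real n + 1"
    have x3: "x \<ge> 3" using 3 by (simp add: x_def)
    have "x \<le> (5/8 * x)\<^sup>2"
      using mult_right_mono[of 1 "25/64 * x" x] x3 by (simp add: power2_eq_square)
    hence "sqrt x \<le> 5/8 * x" using x3 by (intro real_le_lsqrt) auto
    moreover have "sqrt (real n) \<le> sqrt x" by (simp add: x_def)
    ultimately show ?thesis unfolding x_def by linarith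
  qed simp
qed

lemma harm_le_sqrt: "(harm n :: real) \<le> 5/4 * sqrt (real n)"
proof (induction n)
  case (Suc n)
  define a where "a = sqrt (real n + 1)"
  define b where "b = sqrt (real n)"
  have pos: "a > 0" "b \<ge> 0" by (auto simp: a_def b_def)
  have ab: "(a - b) * (a + b) = 1"
    by (simp add: a_def b_def algebra_simps power2_eq_square[symmetric])
  have "a + b \<le> 5/4 * (real n + 1)" unfolding a_def b_def by (rule sqrt_add_sqrt_Suc_le)
  have "1 / (real n + 1) = (5/4) / (5/4 * (real n + 1))" by (simp add: field_simps)
  also have "\<dots> \<le> (5/4) / (a + b)"
    using \<open>a + b \<le> _\<close> pos by (intro divide_left_mono) (auto intro!: mult_pos_pos add_pos_nonneg)
  also have "\<dots> = 5/4 * (a - b)" using ab pos by (simp add: field_simps)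
  finally have "1 / (real n + 1) \<le> 5/4 * (a - b)" .
  moreover have "harm (Suc n) = harm n + 1 / (real n + 1)" by (simp add: harm_Suc field_simps)
  ultimately show ?case using Suc.IH unfolding a_def b_def by (simp add: algebra_simps)
qed (simp add: harm_def)

lemma prod_one_plus_le_exp_harm:
  assumes "0 \<le> c"
  shows "(\<Prod>k\<in>{1..j}. 1 + c / real k) \<le> exp (c * harm j)"
proof -
  have "(\<Prod>k\<in>{1..j}. 1 + c / real k) \<le> (\<Prod>k\<in>{1..j}. exp (c / real k))"
    using assms by (intro prod_mono) (auto simp: exp_ge_add_one_self add.commute)
  also have "\<dots> = exp (\<Sum>k\<in>{1..j}. c / real k)" by (rule exp_sum[symmetric]) simp
  also have "\<dots> = exp (c * harm j)" by (simp add: harm_def sum_distrib_left field_simps)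
  finally show ?thesis .
qed

lemma harm_le_one_plus_ln: "(harm (Suc n) :: real) \<le> 1 + ln (real (Suc n))"
proof -
  have "harm (Suc n) - ln (real (Suc n)) \<le> harm (Suc 0) - ln (real (Suc 0))"
    using decseq_harm_diff_ln unfolding decseq_def by blast
  thus ?thesis by (simp add: harm_def)
qed

lemma sum_inverse_Suc_eq_harm: "(\<Sum>j\<le>n. 1 / (real j + 1)) = (harm (Suc n) :: real)"
  by (simp add: harm_altdef lessThan_Suc_atMost inverse_eq_divide add.commute)

lemma rate_distance_term:
  assumes T: "T \<ge> 1" and L: "L > 0" and \<tau>: "\<tau> = 1 / (5 * L * sqrt (real T))"
    and A: "A \<ge> 0" and v: "0 \<le> v" "v \<le> 3 / (real T + 1)"
  shows "v * A / (2 * \<tau>) \<le> 10 / sqrt (real T) * (L * A)"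
proof -
  define s where "s = sqrt (real T)"
  have s: "s \<ge> 1" "s * s = real T" using T by (simp_all add: s_def)
  have "v * (5 * L * s / 2) \<le> 3 / (real T + 1) * (5 * L * s / 2)"
    using v L s by (intro mult_right_mono) auto
  also have "\<dots> \<le> (15/2 * L * s) / real T"
    using T L s by (simp add: field_simps)
  also have "\<dots> = 15/2 * L / s" using s by (simp add: field_simps flip: s(2))
  also have "\<dots> \<le> 10 * L / s" using L s by (intro divide_right_mono) auto
  finally have "v * (5 * L * s / 2) * A \<le> 10 * L / s * A" using A by (rule mult_right_mono)
  thus ?thesis by (simp add: \<tau> s_def mult_ac)
qed

lemma rate_gap_term:
  assumes T: "T \<ge> 1" and L: "L > 0" and \<tau>: "\<tau> = 1 / (5 * L * sqrt (real T))"
    and E: "E \<ge> 0" and v: "0 \<le> v" "v \<le> 3 / (real T + 1)"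
  shows "v * (8 * \<tau>\<^sup>2 * L * E) / (2 * \<tau>) \<le> 10 / sqrt (real T) * (1 / sqrt (real T) * E)"
proof -
  define s where "s = sqrt (real T)"
  have s: "s \<ge> 1" "s * s = real T" using T by (simp_all add: s_def)
  have "v * (4 / (5 * s)) \<le> 3 / (real T + 1) * (4 / (5 * s))"
    using v s by (intro mult_right_mono) auto
  also have "\<dots> \<le> 12/5 / real T"
  proof -
    have "real T \<le> s * (real T + 1)" using mult_mono[of 1 s "real T" "real T + 1"] s by simp
    thus ?thesis using T s by (simp add: field_simps)
  qed
  also have "\<dots> \<le> 10 / real T" using T by (intro divide_right_mono) auto
  also have "\<dots> = 10 / s * (1 / s)" by (simp flip: s(2))
  finally have "v * (4 / (5 * s)) * E \<le> 10 / s * (1 / s) * E" using E by (rule mult_right_mono)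
  moreover have "v * (8 * \<tau>\<^sup>2 * L * E) / (2 * \<tau>) = v * (4 / (5 * s)) * E"
    using L s by (simp add: \<tau> s_def power2_eq_square field_simps)
  ultimately show ?thesis by (simp add: s_def mult_ac)
qed

lemma rate_noise_term:
  assumes T: "T \<ge> 1" and L: "L > 0" and \<tau>: "\<tau> = 1 / (5 * L * sqrt (real T))"
    and S: "S \<ge> 0" and sv: "sv \<le> 3 * (1 + ln (real T + 1))"
  shows "\<tau>\<^sup>2 * (4 * S) * sv / (2 * \<tau>) \<le> 10 / sqrt (real T) * (S / L * (1 / real T + 4 * ln (real T + 1)))"
proof -
  have "ln 2 \<le> ln (real T + 1)" using T by simp
  hence "2/3 \<le> ln (real T + 1)" using ln2_ge_two_thirds by linarith
  hence "2 * (3 * (1 + ln (real T + 1))) / 5 \<le> 40 * ln (real T + 1)" by (simp add: field_simps; linarith)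
  also have "\<dots> \<le> 10 * (1 / real T + 4 * ln (real T + 1))" by (simp add: algebra_simps)
  finally have "2 * (3 * (1 + ln (real T + 1))) / 5 \<le> 10 * (1 / real T + 4 * ln (real T + 1))" .
  moreover have "2 * sv / 5 \<le> 2 * (3 * (1 + ln (real T + 1))) / 5" using sv by simp
  ultimately have "S * (2 * sv / 5) \<le> S * (10 * (1 / real T + 4 * ln (real T + 1)))"
    using S by (intro mult_left_mono) auto
  have "\<tau> > 0" using L T by (simp add: \<tau>)
  hence "\<tau>\<^sup>2 * (4 * S) * sv / (2 * \<tau>) = 2 * \<tau> * S * sv" by (simp add: power2_eq_square field_simps)
  also have "\<dots> = S * (2 * sv / 5) / (L * sqrt (real T))" by (simp add: \<tau> field_simps)
  also have "\<dots> \<le> S * (10 * (1 / real T + 4 * ln (real T + 1))) / (L * sqrt (real T))"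
    using \<open>S * (2 * sv / 5) \<le> _\<close> L T by (intro divide_right_mono) auto
  also have "\<dots> = 10 / sqrt (real T) * (S / L * (1 / real T + 4 * ln (real T + 1)))"
    using L by (simp add: field_simps)
  finally show ?thesis .
qed

lemma le_ennreal_add_mult_Inf:
  fixes S :: "real set"
  assumes "S \<noteq> {}" and S: "\<And>d. d \<in> S \<Longrightarrow> 0 \<le> d" and c: "0 < c" and K: "0 \<le> K"
    and bound: "\<And>d. d \<in> S \<Longrightarrow> X \<le> ennreal (K + c * d)"
  shows "X \<le> ennreal (K + c * Inf S)"
proof (cases X)
  case (real x)
  have "(x - K) / c \<le> Inf S"
  proof (rule cInf_greatest[OF \<open>S \<noteq> {}\<close>])
    fix d assume "d \<in> S"
    have "0 \<le> K + c * d" using K c S[OF \<open>d \<in> S\<close>] by simp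
    moreover have "ennreal x \<le> ennreal (K + c * d)" using bound[OF \<open>d \<in> S\<close>] real by simp
    ultimately have "x \<le> K + c * d" by (simp del: ennreal_plus)
    thus "(x - K) / c \<le> d" using c by (simp add: field_simps)
  qed
  thus ?thesis using real c by (simp add: ennreal_leI field_simps)
next
  case top
  with bound \<open>S \<noteq> {}\<close> show ?thesis by (auto simp: top_unique)
qed

section \<open>The randomized incremental proximal method\<close>

primrec iterates :: "('b \<Rightarrow> 'a \<Rightarrow> 'a) \<Rightarrow> 'a \<Rightarrow> (nat \<Rightarrow> 'b) \<Rightarrow> nat \<Rightarrow> 'a" where
  "iterates step x0 \<xi> 0 = x0"
| "iterates step x0 \<xi> (Suc t) = step (\<xi> t) (iterates step x0 \<xi> t)"

lemma iterates_fun_upd: "s \<le> t \<Longrightarrow> iterates step x0 (\<xi>(t := z)) s = iterates step x0 \<xi> s"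
  by (induction s) auto

lemma iterates_cong: "(\<And>s. s < t \<Longrightarrow> \<xi> s = \<xi>' s) \<Longrightarrow> iterates step x0 \<xi> t = iterates step x0 \<xi>' t"
  by (induction t) auto

primrec running_average :: "(nat \<Rightarrow> real) \<Rightarrow> 'a::real_vector \<Rightarrow> (nat \<Rightarrow> 'a) \<Rightarrow> nat \<Rightarrow> 'a" where
  "running_average c p X 0 = p"
| "running_average c p X (Suc t) = c t *\<^sub>R running_average c p X t + (1 - c t) *\<^sub>R X (Suc t)"

lemma running_average_cong:
  "(\<And>s. s \<le> t \<Longrightarrow> X s = X' s) \<Longrightarrow> running_average c p X t = running_average c p X' t"
  by (induction t) auto

locale incremental_prox_problem =
  fixes D :: "'i measure"
    and f :: "'i \<Rightarrow> 'a::euclidean_space \<Rightarrow> real"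
    and gradf :: "'i \<Rightarrow> 'a \<Rightarrow> 'a"
    and F :: "'a \<Rightarrow> real"
    and g :: "nat \<Rightarrow> 'a \<Rightarrow> real"
    and m :: nat and L Lg :: real
    and xs :: 'a
  assumes D_prob: "prob_space D"
    and L_pos: "L > 0"
    and f_convex: "\<And>i. i \<in> space D \<Longrightarrow> convex_on UNIV (f i)"
    and f_grad: "\<And>i x. i \<in> space D \<Longrightarrow> (f i has_derivative (\<lambda>v. gradf i x \<bullet> v)) (at x)"
    and f_lipschitz: "\<And>i x y. i \<in> space D \<Longrightarrow> norm (gradf i x - gradf i y) \<le> L * norm (x - y)"
    and gradf_meas: "(\<lambda>(i, x). gradf i x) \<in> borel_measurable (D \<Otimes>\<^sub>M borel)"
    and F_exp: "\<And>x. integrable D (\<lambda>i. f i x) \<and> F x = (\<integral>i. f i x \<partial>D)"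
    and F_grad: "\<And>x. integrable D (\<lambda>i. gradf i x) \<and>
                  (F has_derivative (\<lambda>v. (\<integral>i. gradf i x \<partial>D) \<bullet> v)) (at x)"
    and m_pos: "m \<ge> 1"
    and g_convex: "\<And>j. j \<in> {1..m} \<Longrightarrow> convex_on UNIV (g j)"
    and g_lipschitz: "\<And>j x y. j \<in> {1..m} \<Longrightarrow> \<bar>g j x - g j y\<bar> \<le> Lg * norm (x - y)"
    and xs_min: "\<And>y. F xs + (\<Sum>j=1..m. g j xs) \<le> F y + (\<Sum>j=1..m. g j y)"
    and sigma_fin: "integrable D (\<lambda>i. (norm (gradf i xs))\<^sup>2)"
begin

definition "gradF x = (\<integral>i. gradf i x \<partial>D)"
definition "gsum x = (\<Sum>j=1..m. g j x)"
definition "h x = F x + gsum x"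
definition "sigma2 = (\<integral>i. (norm (gradf i xs))\<^sup>2 \<partial>D)"

sublocale D: prob_space D by (rule D_prob)

lemma Lg_nonneg: "Lg \<ge> 0"
proof -
  obtain v :: 'a where "v \<in> Basis" using nonempty_Basis by blast
  hence "norm v = 1" by simp
  moreover have "\<bar>g 1 v - g 1 0\<bar> \<le> Lg * norm (v - 0)" using g_lipschitz[of 1 v 0] m_pos by simp
  ultimately show ?thesis by simp
qed

lemma g_lipschitz_on: "j \<in> {1..m} \<Longrightarrow> Lg-lipschitz_on UNIV (g j)"
  using g_lipschitz Lg_nonneg by (auto intro: lipschitz_onI simp: dist_norm)

lemma measurable_gradf[measurable]: "(\<lambda>i. gradf i x) \<in> borel_measurable D"
  using measurable_compose[OF measurable_Pair[OF measurable_ident_sets[OF refl] measurable_const] gradf_meas]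
  by simp

lemma integrable_f: "integrable D (\<lambda>i. f i x)" and F_eq_integral: "F x = (\<integral>i. f i x \<partial>D)"
  using F_exp by blast+

lemma integrable_gradf: "integrable D (\<lambda>i. gradf i x)"
  and F_has_derivative: "(F has_derivative (\<lambda>v. gradF x \<bullet> v)) (at x)"
  using F_grad unfolding gradF_def by blast+

lemma gradF_lipschitz: "norm (gradF x - gradF y) \<le> L * norm (x - y)"
proof -
  have "norm (gradF x - gradF y) = norm (\<integral>i. gradf i x - gradf i y \<partial>D)"
    unfolding gradF_def by (simp add: integrable_gradf)
  also have "\<dots> \<le> (\<integral>i. norm (gradf i x - gradf i y) \<partial>D)" by (rule integral_norm_bound)
  also have "\<dots> \<le> (\<integral>i. L * norm (x - y) \<partial>D)"
    by (rule integral_mono) (auto intro!: integrable_gradf f_lipschitz)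
  finally show ?thesis by (simp add: D.prob_space)
qed

lemma F_upper_bound: "F y \<le> F x + gradF x \<bullet> (y - x) + L / 2 * (norm (y - x))\<^sup>2"
  by (rule lipschitz_gradient_upper_bound[OF F_has_derivative gradF_lipschitz])

lemma F_convex: "convex_on UNIV F"
proof (rule convex_onI)
  fix t :: real and x y :: 'a assume t: "0 < t" "t < 1"
  have "F ((1 - t) *\<^sub>R x + t *\<^sub>R y) \<le> (\<integral>i. (1 - t) * f i x + t * f i y \<partial>D)"
    unfolding F_eq_integral using t
    by (intro integral_mono convex_onD[OF f_convex]) (auto intro!: integrable_f)
  thus "F ((1 - t) *\<^sub>R x + t *\<^sub>R y) \<le> (1 - t) * F x + t * F y"
    by (simp add: F_eq_integral integrable_f)
qed simp

lemma gsum_convex: "convex_on UNIV gsum"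
proof -
  have "convex_on UNIV (\<lambda>x. \<Sum>j\<in>A. g j x)" if "finite A" "A \<subseteq> {1..m}" for A
    using that by (induction A rule: finite_induct) (auto intro!: convex_on_add g_convex simp: convex_on_const)
  from this[of "{1..m}"] show ?thesis unfolding gsum_def[abs_def] by simp
qed

lemma gsum_lipschitz: "\<bar>gsum x - gsum y\<bar> \<le> real m * Lg * norm (x - y)"
proof -
  have "\<bar>gsum x - gsum y\<bar> \<le> (\<Sum>j=1..m. \<bar>g j x - g j y\<bar>)"
    unfolding gsum_def sum_subtractf[symmetric] by (rule sum_abs)
  also have "\<dots> \<le> (\<Sum>j=1..m. Lg * norm (x - y))" by (intro sum_mono g_lipschitz) auto
  finally show ?thesis by simp
qed

lemma single_regularizer_error:
  assumes j: "j \<in> {1..m}" and \<tau>: "\<tau> \<ge> 0"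
  shows "2 * \<tau> * ((gsum y - real m * g j y) - (gsum x - real m * g j x))
           \<le> 1/4 * (norm (y - x))\<^sup>2 + 16 * \<tau>\<^sup>2 * (real m)\<^sup>2 * Lg\<^sup>2"
proof -
  have "gsum y - gsum x \<le> real m * Lg * norm (y - x)"
    using gsum_lipschitz[of y x] by (simp add: abs_le_iff)
  moreover have "real m * (g j x - g j y) \<le> real m * (Lg * norm (y - x))"
    using g_lipschitz[OF j, of x y] by (intro mult_left_mono) (auto simp: abs_le_iff norm_minus_commute)
  ultimately have "(gsum y - real m * g j y) - (gsum x - real m * g j x) \<le> 2 * (real m * Lg * norm (y - x))"
    by (simp add: algebra_simps)
  hence "2 * \<tau> * ((gsum y - real m * g j y) - (gsum x - real m * g j x)) \<le> 2 * \<tau> * (2 * (real m * Lg * norm (y - x)))"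
    using \<tau> by (intro mult_left_mono) auto
  also have "\<dots> \<le> 1/4 * (norm (y - x))\<^sup>2 + 16 * \<tau>\<^sup>2 * (real m)\<^sup>2 * Lg\<^sup>2"
    using zero_le_power2[of "1/2 * norm (y - x) - 4 * (\<tau> * real m * Lg)"]
    by (simp add: power2_eq_square algebra_simps)
  finally show ?thesis .
qed

lemma h_convex: "convex_on UNIV h"
  unfolding h_def[abs_def] by (intro convex_on_add F_convex gsum_convex)

lemma h_measurable[measurable]: "h \<in> borel_measurable borel"
proof (rule borel_measurable_continuous_onI)
  have "continuous_on UNIV F"
    using F_has_derivative by (intro has_derivative_continuous_on) blast
  moreover have "continuous_on UNIV (g j)" if "j \<in> {1..m}" for j
    using lipschitz_on_continuous_on[OF g_lipschitz_on[OF that]] .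
  ultimately show "continuous_on UNIV h"
    unfolding h_def[abs_def] gsum_def by (intro continuous_intros) auto
qed

lemma h_min: "h xs \<le> h x"
  using xs_min[of x] by (simp add: h_def gsum_def)

lemma optimality_condition: "0 \<le> gsum x - gsum xs + gradF xs \<bullet> (x - xs)"
proof -
  define d where "d = x - xs"
  have "- (gsum x - gsum xs + gradF xs \<bullet> d) \<le> 0"
  proof (rule nonpos_if_le_small_multiples[where B = "L / 2 * (norm d)\<^sup>2"])
    fix s :: real assume s: "0 < s" "s \<le> 1"
    have "gsum (xs + s *\<^sub>R d) = gsum ((1 - s) *\<^sub>R xs + s *\<^sub>R x)"
      by (simp add: d_def algebra_simps)
    also have "\<dots> \<le> (1 - s) * gsum xs + s * gsum x"
      using s by (intro convex_onD[OF gsum_convex]) auto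
    finally have "gsum (xs + s *\<^sub>R d) \<le> gsum xs + s * (gsum x - gsum xs)"
      by (simp add: algebra_simps)
    moreover have "F (xs + s *\<^sub>R d) \<le> F xs + s * (gradF xs \<bullet> d) + s * (s * (L / 2 * (norm d)\<^sup>2))"
      using F_upper_bound[of "xs + s *\<^sub>R d" xs] s by (simp add: power_mult_distrib power2_eq_square algebra_simps)
    moreover have "h xs \<le> h (xs + s *\<^sub>R d)" by (rule h_min)
    ultimately have "0 \<le> s * ((gsum x - gsum xs + gradF xs \<bullet> d) + s * (L / 2 * (norm d)\<^sup>2))"
      unfolding h_def by (simp add: algebra_simps)
    thus "- (gsum x - gsum xs + gradF xs \<bullet> d) \<le> s * (L / 2 * (norm d)\<^sup>2)"
      using s by (simp add: zero_le_mult_iff)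
  qed
  thus ?thesis by (simp add: d_def)
qed

lemma gradf_square_le: "i \<in> space D \<Longrightarrow>
  (norm (gradf i x))\<^sup>2 \<le> 2 * (norm (gradf i x - gradf i xs))\<^sup>2 + 2 * (norm (gradf i xs))\<^sup>2"
proof -
  have "norm (gradf i x) \<le> norm (gradf i x - gradf i xs) + norm (gradf i xs)"
    using norm_triangle_ineq[of "gradf i x - gradf i xs" "gradf i xs"] by simp
  hence "(norm (gradf i x))\<^sup>2 \<le> (norm (gradf i x - gradf i xs) + norm (gradf i xs))\<^sup>2"
    by (intro power_mono) auto
  also have "\<dots> \<le> 2 * (norm (gradf i x - gradf i xs))\<^sup>2 + 2 * (norm (gradf i xs))\<^sup>2"
    using sum_squares_bound[of "norm (gradf i x - gradf i xs)" "norm (gradf i xs)"]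
    by (simp add: power2_eq_square algebra_simps)
  finally show ?thesis .
qed

lemma integrable_gradf_square: "integrable D (\<lambda>i. (norm (gradf i x))\<^sup>2)"
proof (rule Bochner_Integration.integrable_bound)
  show "integrable D (\<lambda>i. 2 * (L * norm (x - xs))\<^sup>2 + 2 * (norm (gradf i xs))\<^sup>2)"
    using sigma_fin by simp
  show "AE i in D. norm ((norm (gradf i x))\<^sup>2) \<le> norm (2 * (L * norm (x - xs))\<^sup>2 + 2 * (norm (gradf i xs))\<^sup>2)"
  proof (rule AE_I2)
    fix i assume i: "i \<in> space D"
    have "(norm (gradf i x - gradf i xs))\<^sup>2 \<le> (L * norm (x - xs))\<^sup>2"
      using f_lipschitz[OF i, of x xs] by (intro power_mono) auto
    thus "norm ((norm (gradf i x))\<^sup>2) \<le> norm (2 * (L * norm (x - xs))\<^sup>2 + 2 * (norm (gradf i xs))\<^sup>2)"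
      using gradf_square_le[OF i, of x] by simp
  qed
qed measurable

lemma integrable_gradient_noise_square: "integrable D (\<lambda>i. (norm (gradf i x - gradF x))\<^sup>2)"
  using D.integrable_norm_diff_expectation_square[OF integrable_gradf integrable_gradf_square]
  by (simp add: gradF_def)

lemma gradient_noise_variance_bound:
  "(\<integral>i. (norm (gradf i x - gradF x))\<^sup>2 \<partial>D) \<le> 4 * L * (h x - h xs) + 2 * sigma2"
proof -
  have "(\<integral>i. (norm (gradf i x - gradF x))\<^sup>2 \<partial>D) \<le> (\<integral>i. (norm (gradf i x))\<^sup>2 \<partial>D)"
    using D.integral_norm_diff_expectation_square[OF integrable_gradf integrable_gradf_square]
    by (simp add: gradF_def)
  also have "\<dots> \<le> (\<integral>i. 4 * L * (f i x - f i xs - gradf i xs \<bullet> (x - xs)) + 2 * (norm (gradf i xs))\<^sup>2 \<partial>D)"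
  proof (rule integral_mono)
    fix i assume i: "i \<in> space D"
    have "(norm (gradf i x - gradf i xs))\<^sup>2 \<le> 2 * L * (f i x - f i xs - gradf i xs \<bullet> (x - xs))"
      by (rule lipschitz_gradient_cocoercive[OF f_convex[OF i] f_grad[OF i] f_lipschitz[OF i] L_pos])
    with gradf_square_le[OF i, of x]
    show "(norm (gradf i x))\<^sup>2 \<le> 4 * L * (f i x - f i xs - gradf i xs \<bullet> (x - xs)) + 2 * (norm (gradf i xs))\<^sup>2"
      by simp
  qed (use integrable_gradf_square integrable_f integrable_gradf sigma_fin in auto)
  also have "\<dots> = 4 * L * (F x - F xs - gradF xs \<bullet> (x - xs)) + 2 * sigma2"
    using integrable_f integrable_gradf sigma_fin by (simp add: F_eq_integral gradF_def sigma2_def)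
  also have "\<dots> \<le> 4 * L * (h x - h xs) + 2 * sigma2"
    using optimality_condition[of x] L_pos by (simp add: h_def)
  finally show ?thesis .
qed

text \<open>Indices outside \<open>{1..m}\<close> have probability zero; mapping them to \<open>1\<close> makes the step
  measurable in the index without changing it on \<open>{1..m}\<close>.\<close>
definition "idx j = (if j \<in> {1..m} then j else 1)"

definition "prox_step \<tau> j i x = prox (\<tau> * real m) (g (idx j)) (x - \<tau> *\<^sub>R gradf i x)"

lemma idx_in: "idx j \<in> {1..m}"
  using m_pos by (auto simp: idx_def)

lemma prox_step_inequality:
  fixes x u :: 'a
  assumes i: "i \<in> space D" and j: "j \<in> {1..m}" and \<tau>: "0 < \<tau>" "\<tau> * L \<le> 1/5"
  defines "x' \<equiv> prox_step \<tau> j i x"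
  shows "2 * \<tau> * (h x' - h xs) + (norm (x' - u))\<^sup>2
     \<le> (norm (x - u))\<^sup>2 + 2 * \<tau> * (h u - h xs) + 2 * \<tau>\<^sup>2 * (norm (gradf i x - gradF x))\<^sup>2
        + 16 * \<tau>\<^sup>2 * (real m)\<^sup>2 * Lg\<^sup>2
        + 2 * \<tau> * ((real m * g j u - gsum u) - (real m * g j x - gsum x) + (f i u - F u) - (f i x - F x))"
proof -
  define d where "d = x' - x"
  define e where "e = gradf i x - gradF x"
  have "2 * (\<tau> * real m * g j x') + (norm (x' - u))\<^sup>2
      \<le> 2 * (\<tau> * real m * g j u) + (norm (x - u))\<^sup>2 - (norm d)\<^sup>2 - 2 * (\<tau> * (gradf i x \<bullet> (x' - u)))"
    unfolding d_def using \<tau> j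
    by (intro prox_gradient_step_inequality[OF g_lipschitz_on[OF j] _ g_convex[OF j]])
      (auto simp: x'_def prox_step_def idx_def)
  moreover have "\<tau> * (gradf i x \<bullet> (x' - u)) = \<tau> * (gradf i x \<bullet> (x - u)) + \<tau> * (gradF x \<bullet> d) + \<tau> * (e \<bullet> d)"
    by (simp add: d_def e_def inner_diff_left inner_diff_right algebra_simps)
  moreover have "\<tau> * f i x - \<tau> * (gradf i x \<bullet> (x - u)) \<le> \<tau> * f i u"
    using convex_on_gradient_inequality[OF f_convex[OF i] f_grad[OF i, of x], of u] \<tau>
    by (simp add: inner_diff_right flip: right_diff_distrib)
  moreover have "\<tau> * F x' \<le> \<tau> * F x + \<tau> * (gradF x \<bullet> d) + 1/10 * (norm d)\<^sup>2"
  proof -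
    have "\<tau> * F x' \<le> \<tau> * (F x + gradF x \<bullet> d + L / 2 * (norm d)\<^sup>2)"
      using F_upper_bound[of x' x] \<tau> unfolding d_def by (intro mult_left_mono) auto
    moreover have "\<tau> * L / 2 * (norm d)\<^sup>2 \<le> 1/10 * (norm d)\<^sup>2"
      by (rule mult_right_mono) (use \<tau> in linarith, simp)
    ultimately show ?thesis by (simp add: algebra_simps)
  qed
  moreover have "- 2 * (\<tau> * (e \<bullet> d)) \<le> 2 * \<tau>\<^sup>2 * (norm e)\<^sup>2 + 1/2 * (norm d)\<^sup>2"
  proof -
    have "(norm ((2 * \<tau>) *\<^sub>R e + d))\<^sup>2 = 4 * \<tau>\<^sup>2 * (norm e)\<^sup>2 + 4 * (\<tau> * (e \<bullet> d)) + (norm d)\<^sup>2"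
      using dot_norm[of "(2 * \<tau>) *\<^sub>R e" d] by (simp add: power_mult_distrib)
    thus ?thesis using zero_le_power2[of "norm ((2 * \<tau>) *\<^sub>R e + d)"] by linarith
  qed
  moreover have "2 * (\<tau> * gsum x') - 2 * (\<tau> * real m * g j x') - 2 * (\<tau> * gsum x) + 2 * (\<tau> * real m * g j x)
      \<le> 1/4 * (norm d)\<^sup>2 + 16 * \<tau>\<^sup>2 * (real m)\<^sup>2 * Lg\<^sup>2"
    using single_regularizer_error[OF j less_imp_le[OF \<tau>(1)], of x' x] unfolding d_def
    by (simp add: algebra_simps)
  \<comment> \<open>The \<open>|x' - x|\<^sup>2\<close> terms, with total weight \<open>1/5 + 1/2 + 1/4 < 1\<close>, are absorbed by the
    prox inequality; this is where \<open>\<tau> L \<le> 1/5\<close> is needed.\<close>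
  ultimately have "2 * (\<tau> * F x') + 2 * (\<tau> * gsum x') + (norm (x' - u))\<^sup>2
    \<le> (norm (x - u))\<^sup>2 + 2 * \<tau>\<^sup>2 * (norm e)\<^sup>2 + 16 * \<tau>\<^sup>2 * (real m)\<^sup>2 * Lg\<^sup>2
      + 2 * (\<tau> * real m * g j u) - 2 * (\<tau> * real m * g j x) + 2 * (\<tau> * gsum x)
      + 2 * (\<tau> * f i u) - 2 * (\<tau> * f i x) + 2 * (\<tau> * F x)"
    using zero_le_power2[of "norm d"] by linarith
  thus ?thesis by (simp add: h_def e_def algebra_simps)
qed

definition "sample_bound \<tau> x u i = (norm (x - u))\<^sup>2 + 2 * \<tau> * (h u - h xs)
  + 2 * \<tau>\<^sup>2 * (norm (gradf i x - gradF x))\<^sup>2 + 16 * \<tau>\<^sup>2 * (real m)\<^sup>2 * Lg\<^sup>2 + 2 * \<tau> * ((f i u - F u) - (f i x - F x))"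

lemma mean_prox_step_inequality:
  assumes i: "i \<in> space D" and \<tau>: "0 < \<tau>" "\<tau> * L \<le> 1/5"
  shows "(\<Sum>j=1..m. 2 * \<tau> * (h (prox_step \<tau> j i x) - h xs) + (norm (prox_step \<tau> j i x - u))\<^sup>2) / real m
     \<le> sample_bound \<tau> x u i"
proof -
  define bias where "bias j = 2 * \<tau> * ((real m * g j u - gsum u) - (real m * g j x - gsum x))" for j
  have "(\<Sum>j=1..m. bias j) = 0"
    by (simp add: bias_def gsum_def sum_subtractf sum_distrib_left[symmetric])
  moreover have "(\<Sum>j=1..m. 2 * \<tau> * (h (prox_step \<tau> j i x) - h xs) + (norm (prox_step \<tau> j i x - u))\<^sup>2)
      \<le> (\<Sum>j=1..m. sample_bound \<tau> x u i + bias j)"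
    by (intro sum_mono) (use prox_step_inequality[OF i _ \<tau>] in \<open>simp add: sample_bound_def bias_def algebra_simps\<close>)
  ultimately show ?thesis
    using m_pos by (simp add: sum.distrib divide_le_eq mult.commute)
qed

lemma integrable_sample_bound: "integrable D (sample_bound \<tau> x u)"
  unfolding sample_bound_def[abs_def] using integrable_gradient_noise_square integrable_f by auto

abbreviation "uniform_index \<equiv> measure_pmf (pmf_of_set {1..m})"
abbreviation "sample_distr \<equiv> D \<Otimes>\<^sub>M uniform_index"

definition "noise_level = 4 * sigma2 + 16 * (real m)\<^sup>2 * Lg\<^sup>2"

lemma integral_sample_bound_le: "(\<integral>i. sample_bound \<tau> x u i \<partial>D)
  \<le> (norm (x - u))\<^sup>2 + 2 * \<tau> * (h u - h xs) + 8 * \<tau>\<^sup>2 * L * (h x - h xs) + \<tau>\<^sup>2 * noise_level"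
proof -
  have "(\<integral>i. sample_bound \<tau> x u i \<partial>D) = (norm (x - u))\<^sup>2 + 2 * \<tau> * (h u - h xs)
      + 2 * \<tau>\<^sup>2 * (\<integral>i. (norm (gradf i x - gradF x))\<^sup>2 \<partial>D) + 16 * \<tau>\<^sup>2 * (real m)\<^sup>2 * Lg\<^sup>2"
    unfolding sample_bound_def using integrable_gradient_noise_square integrable_f
    by (simp add: D.prob_space F_eq_integral[symmetric])
  also have "\<dots> \<le> (norm (x - u))\<^sup>2 + 2 * \<tau> * (h u - h xs) + 8 * \<tau>\<^sup>2 * L * (h x - h xs) + \<tau>\<^sup>2 * noise_level"
    using mult_left_mono[OF gradient_noise_variance_bound[of x], of "2 * \<tau>\<^sup>2"]
    by (simp add: noise_level_def algebra_simps)
  finally show ?thesis .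
qed

lemma prob_space_sample_distr: "prob_space sample_distr"
  by (intro prob_space_pair D_prob prob_space_measure_pmf)

lemma sigma2_nonneg: "sigma2 \<ge> 0"
  by (simp add: sigma2_def)

lemma noise_level_nonneg: "noise_level \<ge> 0"
  by (simp add: noise_level_def sigma2_nonneg)

lemma measurable_snd_uniform_index: "snd \<in> measurable (N \<Otimes>\<^sub>M uniform_index) (count_space UNIV)"
  using measurable_snd[of N uniform_index] by (simp add: measurable_cong_sets[OF refl sets_measure_pmf_count_space])

lemma measurable_prox_step:
  assumes "\<tau> \<ge> 0" and a: "a \<in> borel_measurable N" and b: "b \<in> measurable N D"
    and c: "c \<in> measurable N (count_space UNIV)"
  shows "(\<lambda>\<xi>. prox_step \<tau> (c \<xi>) (b \<xi>) (a \<xi>)) \<in> borel_measurable N"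
proof (rule measurable_compose_countable[OF _ c])
  fix k :: nat
  have "(\<lambda>\<xi>. gradf (b \<xi>) (a \<xi>)) \<in> borel_measurable N"
    using measurable_compose[OF measurable_Pair[OF b a] gradf_meas] by simp
  hence "(\<lambda>\<xi>. a \<xi> - \<tau> *\<^sub>R gradf (b \<xi>) (a \<xi>)) \<in> borel_measurable N"
    using a by measurable
  moreover have "prox (\<tau> * real m) (g (idx k)) \<in> borel_measurable borel"
    using \<open>\<tau> \<ge> 0\<close> by (intro borel_measurable_prox[OF g_lipschitz_on[OF idx_in] _ g_convex[OF idx_in]]) simp
  ultimately show "(\<lambda>\<xi>. prox_step \<tau> k (b \<xi>) (a \<xi>)) \<in> borel_measurable N"
    unfolding prox_step_def by (rule measurable_compose)
qed

lemma AE_sample_index: "AE q in sample_distr. snd q \<in> {1..m}"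
proof (rule pair_sigma_finite.AE_pair_measure)
  show "pair_sigma_finite D uniform_index"
    by (intro pair_sigma_finite.intro prob_space_imp_sigma_finite D_prob prob_space_measure_pmf)
  have "{q \<in> space sample_distr. snd q \<in> {1..m}} = snd -` {1..m} \<inter> space sample_distr" by auto
  also have "\<dots> \<in> sets sample_distr" by (rule measurable_sets[OF measurable_snd_uniform_index]) simp
  finally show "{q \<in> space sample_distr. snd q \<in> {1..m}} \<in> sets sample_distr" .
  show "AE i in D. AE j in uniform_index. snd (i, j) \<in> {1..m}"
    using m_pos by (intro AE_I2 AE_pmfI) auto
qed

lemma expected_prox_step_inequality:
  assumes \<tau>: "0 < \<tau>" "\<tau> * L \<le> 1/5" and r: "r \<ge> 0" and w: "w \<ge> 0"
  shows "(\<integral>\<^sup>+q. ennreal (r + w * (2 * \<tau> * (h (prox_step \<tau> (snd q) (fst q) x) - h xs)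
                              + (norm (prox_step \<tau> (snd q) (fst q) x - u))\<^sup>2)) \<partial>sample_distr)
     \<le> ennreal (r + w * ((norm (x - u))\<^sup>2 + 2 * \<tau> * (h u - h xs) + 8 * \<tau>\<^sup>2 * L * (h x - h xs)
                          + \<tau>\<^sup>2 * noise_level))"
proof -
  define \<Phi> where "\<Phi> i j = 2 * \<tau> * (h (prox_step \<tau> j i x) - h xs) + (norm (prox_step \<tau> j i x - u))\<^sup>2" for i j
  define Y where "Y i j = r + w * \<Phi> i j" for i j
  define B where "B i = r + w * sample_bound \<tau> x u i" for i
  have Y_nonneg: "0 \<le> Y i j" for i j
    unfolding Y_def \<Phi>_def using r w \<tau> h_min by (intro add_nonneg_nonneg mult_nonneg_nonneg) auto
  have mean_Y: "(\<Sum>j=1..m. Y i j) / real m \<le> B i" if "i \<in> space D" for i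
  proof -
    have "(\<Sum>j=1..m. Y i j) / real m = r + w * ((\<Sum>j=1..m. \<Phi> i j) / real m)"
      using m_pos by (simp add: Y_def sum.distrib sum_distrib_left[symmetric] field_simps)
    also have "\<dots> \<le> B i"
      unfolding B_def \<Phi>_def using mean_prox_step_inequality[OF that \<tau>] w
      by (intro add_left_mono mult_left_mono)
    finally show ?thesis .
  qed
  have "(\<lambda>q. prox_step \<tau> (snd q) (fst q) x) \<in> borel_measurable sample_distr"
    using \<tau> by (intro measurable_prox_step measurable_snd_uniform_index) auto
  hence "(\<lambda>q. ennreal (Y (fst q) (snd q))) \<in> borel_measurable sample_distr"
    unfolding Y_def \<Phi>_def by measurable
  hence "(\<integral>\<^sup>+q. ennreal (Y (fst q) (snd q)) \<partial>sample_distr) = (\<integral>\<^sup>+i. (\<integral>\<^sup>+j. ennreal (Y i j) \<partial>uniform_index) \<partial>D)"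
    by (simp add: sigma_finite_measure.nn_integral_fst[symmetric] prob_space_imp_sigma_finite prob_space_measure_pmf)
  also have "\<dots> \<le> (\<integral>\<^sup>+i. ennreal (B i) \<partial>D)"
  proof (rule nn_integral_mono)
    fix i assume "i \<in> space D"
    have "(\<integral>\<^sup>+j. ennreal (Y i j) \<partial>uniform_index) = ennreal ((\<Sum>j=1..m. Y i j) / real m)"
      using m_pos Y_nonneg by (simp add: nn_integral_pmf_of_set_ennreal)
    also have "\<dots> \<le> ennreal (B i)" by (intro ennreal_leI mean_Y) fact
    finally show "(\<integral>\<^sup>+j. ennreal (Y i j) \<partial>uniform_index) \<le> ennreal (B i)" .
  qed
  also have "\<dots> = ennreal (\<integral>i. B i \<partial>D)"
  proof (rule nn_integral_eq_integral)
    show "integrable D B" unfolding B_def using integrable_sample_bound by auto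
    show "AE i in D. 0 \<le> B i"
      using mean_Y Y_nonneg by (intro AE_I2) (meson divide_nonneg_nonneg of_nat_0_le_iff order_trans sum_nonneg)
  qed
  also have "(\<integral>i. B i \<partial>D) = r + w * (\<integral>i. sample_bound \<tau> x u i \<partial>D)"
    unfolding B_def using integrable_sample_bound by (simp add: D.prob_space)
  also have "\<dots> \<le> r + w * ((norm (x - u))\<^sup>2 + 2 * \<tau> * (h u - h xs) + 8 * \<tau>\<^sup>2 * L * (h x - h xs)
                          + \<tau>\<^sup>2 * noise_level)"
    using integral_sample_bound_le w by (intro add_left_mono mult_left_mono)
  finally show ?thesis unfolding Y_def \<Phi>_def by (simp add: ennreal_leI)
qed

definition "sample_step \<tau> q x = prox_step \<tau> (snd q) (fst q) x"

lemma measurable_iterates_sample_step: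
  assumes "\<tau> \<ge> 0" and "t \<le> Suc T"
  shows "(\<lambda>\<xi>. iterates (sample_step \<tau>) x0 \<xi> t) \<in> borel_measurable (PiM {..T} (\<lambda>_. sample_distr))"
  using assms(2)
proof (induction t)
  case (Suc t)
  have \<xi>_t: "(\<lambda>\<xi>. \<xi> t) \<in> measurable (PiM {..T} (\<lambda>_. sample_distr)) sample_distr"
    using Suc.prems by (intro measurable_component_singleton) auto
  have "(\<lambda>\<xi>. prox_step \<tau> (snd (\<xi> t)) (fst (\<xi> t)) (iterates (sample_step \<tau>) x0 \<xi> t))
      \<in> borel_measurable (PiM {..T} (\<lambda>_. sample_distr))"
    using Suc assms(1) measurable_compose[OF \<xi>_t measurable_fst]
      measurable_compose[OF \<xi>_t measurable_snd_uniform_index]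
    unfolding sample_step_def[abs_def] by (intro measurable_prox_step) auto
  thus ?case unfolding iterates.simps sample_step_def[abs_def] .
qed simp

lemma rip_iter_eq_iterates:
  "(\<And>t. t < s \<Longrightarrow> J' t \<in> {1..m}) \<Longrightarrow>
     rip_iter x0 \<tau> m gradf g I' J' s = iterates (sample_step \<tau>) x0 (\<lambda>t. (I' t, J' t)) s"
  by (induction s) (auto simp: sample_step_def prox_step_def idx_def)

end

section \<open>A Lyapunov function for the last iterate\<close>

locale incremental_prox_lyapunov = incremental_prox_problem D f gradf F g m L Lg xs
  for D :: "'i measure" and f :: "'i \<Rightarrow> 'a::euclidean_space \<Rightarrow> real" and gradf F g m L Lg xs +
  fixes \<tau> :: real and T :: nat and x0 p :: 'a
  assumes tau_pos: "0 < \<tau>" and tau_L: "\<tau> * L \<le> 1/5"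
    and p_min: "\<And>y. F p + (\<Sum>j=1..m. g j p) \<le> F y + (\<Sum>j=1..m. g j y)"
begin

text \<open>\<open>a t s\<close> is the coefficient of the gap at iterate \<open>s\<close> in the potential after step \<open>t\<close>;
  the weights \<open>w\<close> and these coefficients are chosen so that the one-step inequality, applied with
  \<open>u\<close> the running average \<open>z\<^sub>t\<close>, telescopes.\<close>
definition "eps = 4 * \<tau> * L"
definition "v j = (\<Prod>k\<in>{1..j}. (real k + eps) / (real k + 1))"
definition "w s = v (T - s)"
definition "a t s = 2 * \<tau> * (w (s - 1) - (real (t + 1) - real s) * (w s - w (s - 1)) - eps * w s)"

lemma eps_nonneg: "0 \<le> eps"
  using tau_pos L_pos by (simp add: eps_def)

lemma eps_le: "eps \<le> 4/5"
proof -
  have "eps = 4 * (\<tau> * L)" by (simp add: eps_def)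
  with tau_L show ?thesis by linarith
qed

lemma v_pos: "0 < v j"
  unfolding v_def using eps_nonneg by (intro prod_pos) (auto intro!: divide_pos_pos add_pos_nonneg)

lemma v_Suc: "v (Suc j) = v j * ((real (Suc j) + eps) / (real (Suc j) + 1))"
  unfolding v_def by simp

lemma v_Suc_le: "v (Suc j) \<le> v j"
proof -
  have "(real (Suc j) + eps) / (real (Suc j) + 1) \<le> 1" using eps_le by simp
  from mult_left_mono[OF this less_imp_le[OF v_pos]] show ?thesis by (simp add: v_Suc)
qed

lemma w_pos: "0 < w s"
  by (simp add: w_def v_pos)

lemma w_T: "w T = 1"
  by (simp add: w_def v_def)

lemma w_le_Suc: "s < T \<Longrightarrow> w s \<le> w (Suc s)"
  using v_Suc_le[of "T - Suc s"] by (simp add: w_def Suc_diff_Suc)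

lemma w_recurrence: "1 \<le> s \<Longrightarrow> s \<le> T \<Longrightarrow> w (s - 1) * (real T + 2 - real s) = (real T + 1 - real s + eps) * w s"
  using v_Suc[of "T - s"] by (simp add: w_def Suc_diff_le of_nat_diff field_simps)

lemma a_nonneg: "1 \<le> s \<Longrightarrow> s \<le> t \<Longrightarrow> t \<le> T \<Longrightarrow> 0 \<le> a t s"
proof -
  assume s: "1 \<le> s" "s \<le> t" "t \<le> T"
  have e: "eps * w s = w (s - 1) * (real T + 2 - real s) - (real T + 1 - real s) * w s"
    using w_recurrence[of s] s by (simp add: algebra_simps)
  have "a t s = 2 * \<tau> * ((real T - real t) * (w s - w (s - 1)))"
    unfolding a_def e by (simp add: algebra_simps)
  moreover have "w (s - 1) \<le> w s" using w_le_Suc[of "s - 1"] s by simp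
  ultimately show ?thesis using s tau_pos by simp
qed

lemma a_Suc_left: "a (Suc t) s + 2 * \<tau> * (w s - w (s - 1)) = a t s"
  unfolding a_def by (simp add: algebra_simps)

lemma a_Suc_diag: "a (Suc t) (Suc t) + 2 * \<tau> * (w (Suc t) - w t) + 2 * \<tau> * eps * w (Suc t) = 2 * \<tau> * w t"
  unfolding a_def by (simp add: algebra_simps)

definition "x_iter \<xi> t = iterates (sample_step \<tau>) x0 \<xi> t"
definition "z_avg \<xi> t = running_average (\<lambda>s. w s / w (Suc s)) p (x_iter \<xi>) t"
definition "gap \<xi> s = h (x_iter \<xi> s) - h xs"
definition "potential t \<xi> = (\<Sum>s\<in>{1..t}. a t s * gap \<xi> s)
   + w t * (2 * \<tau> * gap \<xi> (Suc t) + (norm (x_iter \<xi> (Suc t) - z_avg \<xi> t))\<^sup>2)"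

abbreviation "paths \<equiv> PiM {..T} (\<lambda>_. sample_distr)"

lemma h_p: "h p = h xs"
  using p_min[of xs] h_min[of p] by (simp add: h_def gsum_def)

lemma gap_nonneg: "0 \<le> gap \<xi> s"
  using h_min by (simp add: gap_def)

lemma x_iter_0: "x_iter \<xi> 0 = x0"
  and x_iter_Suc: "x_iter \<xi> (Suc t) = sample_step \<tau> (\<xi> t) (x_iter \<xi> t)"
  by (simp_all add: x_iter_def)

lemma z_avg_0: "z_avg \<xi> 0 = p"
  and z_avg_Suc: "z_avg \<xi> (Suc t) = (w t / w (Suc t)) *\<^sub>R z_avg \<xi> t + (1 - w t / w (Suc t)) *\<^sub>R x_iter \<xi> (Suc t)"
  by (simp_all add: z_avg_def)

lemma x_iter_fun_upd: "s \<le> k \<Longrightarrow> x_iter (\<xi>(k := q)) s = x_iter \<xi> s"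
  unfolding x_iter_def by (rule iterates_fun_upd)

lemma z_avg_fun_upd: "t \<le> k \<Longrightarrow> z_avg (\<xi>(k := q)) t = z_avg \<xi> t"
  unfolding z_avg_def by (rule running_average_cong) (simp add: x_iter_fun_upd)

lemma gap_fun_upd: "s \<le> k \<Longrightarrow> gap (\<xi>(k := q)) s = gap \<xi> s"
  by (simp add: gap_def x_iter_fun_upd)

lemma x_iter_Suc_fun_upd: "x_iter (\<xi>(k := q)) (Suc k) = sample_step \<tau> q (x_iter \<xi> k)"
  by (simp add: x_iter_Suc x_iter_fun_upd)

lemma potential_fun_upd_self: "potential t (\<xi>(t := q)) = (\<Sum>s\<in>{1..t}. a t s * gap \<xi> s)
   + w t * (2 * \<tau> * (h (sample_step \<tau> q (x_iter \<xi> t)) - h xs) + (norm (sample_step \<tau> q (x_iter \<xi> t) - z_avg \<xi> t))\<^sup>2)"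
  unfolding potential_def
  by (simp add: gap_fun_upd z_avg_fun_upd x_iter_Suc_fun_upd) (simp add: gap_def x_iter_Suc_fun_upd)

lemma potential_fun_upd_later: "t < k \<Longrightarrow> potential t (\<xi>(k := q)) = potential t \<xi>"
  unfolding potential_def by (simp add: gap_fun_upd z_avg_fun_upd x_iter_fun_upd)

lemma z_avg_dist_Suc: "t < T \<Longrightarrow>
  w (Suc t) * (norm (x_iter \<xi> (Suc t) - z_avg \<xi> (Suc t)))\<^sup>2 \<le> w t * (norm (x_iter \<xi> (Suc t) - z_avg \<xi> t))\<^sup>2"
proof -
  assume t: "t < T"
  define c where "c = w t / w (Suc t)"
  have c: "0 \<le> c" "c \<le> 1" using w_pos[of t] w_pos[of "Suc t"] w_le_Suc[OF t] by (auto simp: c_def)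
  have "x_iter \<xi> (Suc t) - z_avg \<xi> (Suc t) = c *\<^sub>R (x_iter \<xi> (Suc t) - z_avg \<xi> t)"
    by (simp add: z_avg_Suc c_def[symmetric] algebra_simps)
  hence "w (Suc t) * (norm (x_iter \<xi> (Suc t) - z_avg \<xi> (Suc t)))\<^sup>2
      = (w (Suc t) * c) * c * (norm (x_iter \<xi> (Suc t) - z_avg \<xi> t))\<^sup>2"
    using c by (simp add: power_mult_distrib power2_eq_square)
  also have "w (Suc t) * c = w t" using w_pos[of "Suc t"] by (simp add: c_def)
  also have "w t * c * (norm (x_iter \<xi> (Suc t) - z_avg \<xi> t))\<^sup>2 \<le> w t * 1 * (norm (x_iter \<xi> (Suc t) - z_avg \<xi> t))\<^sup>2"
    using c w_pos[of t] by (intro mult_right_mono mult_left_mono) auto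
  finally show ?thesis by simp
qed

lemma z_avg_gap: "t \<le> T \<Longrightarrow> w t * (h (z_avg \<xi> t) - h xs) \<le> (\<Sum>s\<in>{1..t}. (w s - w (s - 1)) * gap \<xi> s)"
proof (induction t)
  case (Suc t)
  hence t: "t < T" by simp
  define c where "c = w t / w (Suc t)"
  have c: "0 \<le> c" "c \<le> 1" using w_pos[of t] w_pos[of "Suc t"] w_le_Suc[OF t] by (auto simp: c_def)
  have "h (z_avg \<xi> (Suc t)) = h ((1 - (1 - c)) *\<^sub>R z_avg \<xi> t + (1 - c) *\<^sub>R x_iter \<xi> (Suc t))"
    by (simp add: z_avg_Suc c_def[symmetric])
  also have "\<dots> \<le> c * h (z_avg \<xi> t) + (1 - c) * h (x_iter \<xi> (Suc t))"
    using c convex_onD[OF h_convex, of "1 - c"] by simp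
  finally have "w (Suc t) * h (z_avg \<xi> (Suc t)) \<le> w (Suc t) * (c * h (z_avg \<xi> t) + (1 - c) * h (x_iter \<xi> (Suc t)))"
    using w_pos[of "Suc t"] by (intro mult_left_mono) auto
  also have "\<dots> = w t * h (z_avg \<xi> t) + (w (Suc t) - w t) * h (x_iter \<xi> (Suc t))"
    using w_pos[of "Suc t"] by (simp add: c_def algebra_simps)
  finally have "w (Suc t) * (h (z_avg \<xi> (Suc t)) - h xs)
      \<le> w t * (h (z_avg \<xi> t) - h xs) + (w (Suc t) - w t) * gap \<xi> (Suc t)"
    by (simp add: gap_def algebra_simps)
  with Suc.IH t show ?case by simp
qed (simp add: z_avg_0 h_p)

lemma prob_space_paths: "prob_space paths"
  by (intro prob_space_PiM prob_space_sample_distr)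

lemma measurable_x_iter[measurable]: "t \<le> Suc T \<Longrightarrow> (\<lambda>\<xi>. x_iter \<xi> t) \<in> borel_measurable paths"
  unfolding x_iter_def using tau_pos by (intro measurable_iterates_sample_step) auto

lemma measurable_z_avg[measurable]: "t \<le> T \<Longrightarrow> (\<lambda>\<xi>. z_avg \<xi> t) \<in> borel_measurable paths"
proof (induction t)
  case (Suc t)
  hence "(\<lambda>\<xi>. z_avg \<xi> t) \<in> borel_measurable paths" "(\<lambda>\<xi>. x_iter \<xi> (Suc t)) \<in> borel_measurable paths"
    by auto
  thus ?case unfolding z_avg_Suc by measurable
qed (simp add: z_avg_0)

lemma measurable_gap[measurable]: "s \<le> Suc T \<Longrightarrow> (\<lambda>\<xi>. gap \<xi> s) \<in> borel_measurable paths"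
  unfolding gap_def by measurable

lemma measurable_potential[measurable]: "t \<le> T \<Longrightarrow> potential t \<in> borel_measurable paths"
  unfolding potential_def by measurable

lemma potential_nonneg: "t \<le> T \<Longrightarrow> 0 \<le> potential t \<xi>"
  unfolding potential_def using w_pos[of t] tau_pos gap_nonneg
  by (intro add_nonneg_nonneg sum_nonneg mult_nonneg_nonneg a_nonneg) auto

lemma potential_step_bound:
  assumes t: "Suc t \<le> T"
  shows "(\<Sum>s\<in>{1..Suc t}. a (Suc t) s * gap \<xi> s)
      + w (Suc t) * ((norm (x_iter \<xi> (Suc t) - z_avg \<xi> (Suc t)))\<^sup>2 + 2 * \<tau> * (h (z_avg \<xi> (Suc t)) - h xs)
                     + 8 * \<tau>\<^sup>2 * L * gap \<xi> (Suc t) + \<tau>\<^sup>2 * noise_level)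
     \<le> potential t \<xi> + w (Suc t) * \<tau>\<^sup>2 * noise_level"
proof -
  define SB where "SB = (\<Sum>s\<in>{1..t}. (w s - w (s - 1)) * gap \<xi> s)"
  have "w (Suc t) * (h (z_avg \<xi> (Suc t)) - h xs) \<le> SB + (w (Suc t) - w t) * gap \<xi> (Suc t)"
    using z_avg_gap[OF t, of \<xi>] by (simp add: SB_def)
  hence z_gap: "2 * \<tau> * (w (Suc t) * (h (z_avg \<xi> (Suc t)) - h xs))
      \<le> 2 * \<tau> * (SB + (w (Suc t) - w t) * gap \<xi> (Suc t))"
    using tau_pos by (intro mult_left_mono) auto
  have "(\<Sum>s\<in>{1..t}. a (Suc t) s * gap \<xi> s) + 2 * \<tau> * SB
      = (\<Sum>s\<in>{1..t}. (a (Suc t) s + 2 * \<tau> * (w s - w (s - 1))) * gap \<xi> s)"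
    by (simp add: SB_def sum_distrib_left sum.distrib[symmetric] algebra_simps)
  also have "\<dots> = (\<Sum>s\<in>{1..t}. a t s * gap \<xi> s)" by (simp only: a_Suc_left)
  finally have old_coeffs:
    "(\<Sum>s\<in>{1..t}. a (Suc t) s * gap \<xi> s) + 2 * \<tau> * SB = (\<Sum>s\<in>{1..t}. a t s * gap \<xi> s)" .
  have new_coeff: "a (Suc t) (Suc t) * gap \<xi> (Suc t) + 2 * \<tau> * (w (Suc t) - w t) * gap \<xi> (Suc t)
      + w (Suc t) * (8 * \<tau>\<^sup>2 * L * gap \<xi> (Suc t)) = 2 * \<tau> * w t * gap \<xi> (Suc t)"
    using arg_cong[OF a_Suc_diag, of "\<lambda>c. c * gap \<xi> (Suc t)"]
    by (simp add: eps_def power2_eq_square algebra_simps)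
  have "w (Suc t) * (norm (x_iter \<xi> (Suc t) - z_avg \<xi> (Suc t)))\<^sup>2 \<le> w t * (norm (x_iter \<xi> (Suc t) - z_avg \<xi> t))\<^sup>2"
    using t by (intro z_avg_dist_Suc) simp
  with z_gap old_coeffs new_coeff show ?thesis
    unfolding potential_def by (simp add: algebra_simps; linarith)
qed

lemma expected_potential_0:
  "(\<integral>\<^sup>+\<xi>. ennreal (potential 0 \<xi>) \<partial>paths)
     \<le> ennreal (w 0 * ((norm (x0 - p))\<^sup>2 + 8 * \<tau>\<^sup>2 * L * (h x0 - h xs)) + \<tau>\<^sup>2 * noise_level * w 0)"
    (is "_ \<le> ennreal ?C")
proof -
  have "(\<integral>\<^sup>+\<xi>. ennreal (potential 0 \<xi>) \<partial>paths) \<le> (\<integral>\<^sup>+\<xi>. ennreal ?C \<partial>paths)"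
  proof (rule nn_integral_PiM_mono_coordinate[OF prob_space_sample_distr finite_atMost])
    fix \<xi>
    have "(\<integral>\<^sup>+q. ennreal (potential 0 (\<xi>(0 := q))) \<partial>sample_distr)
        = (\<integral>\<^sup>+q. ennreal (0 + w 0 * (2 * \<tau> * (h (prox_step \<tau> (snd q) (fst q) x0) - h xs)
                                   + (norm (prox_step \<tau> (snd q) (fst q) x0 - p))\<^sup>2)) \<partial>sample_distr)"
      by (simp add: potential_fun_upd_self sample_step_def x_iter_0 z_avg_0)
    also have "\<dots> \<le> ennreal ?C"
      using expected_prox_step_inequality[OF tau_pos tau_L order_refl less_imp_le[OF w_pos], of 0 x0 p]
      by (simp add: h_p algebra_simps)
    finally show "(\<integral>\<^sup>+q. ennreal (potential 0 (\<xi>(0 := q))) \<partial>sample_distr) \<le> ennreal ?C" .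
  qed (use measurable_potential[of 0] in simp_all)
  thus ?thesis using prob_space.emeasure_space_1[OF prob_space_paths] by simp
qed

lemma expected_potential_Suc:
  assumes t: "Suc t \<le> T"
  shows "(\<integral>\<^sup>+\<xi>. ennreal (potential (Suc t) \<xi>) \<partial>paths)
     \<le> (\<integral>\<^sup>+\<xi>. ennreal (potential t \<xi>) \<partial>paths) + ennreal (w (Suc t) * \<tau>\<^sup>2 * noise_level)"
proof -
  define K where "K = w (Suc t) * \<tau>\<^sup>2 * noise_level"
  have K: "0 \<le> K" using w_pos[of "Suc t"] noise_level_nonneg by (simp add: K_def)
  have "(\<integral>\<^sup>+\<xi>. ennreal (potential (Suc t) \<xi>) \<partial>paths) \<le> (\<integral>\<^sup>+\<xi>. ennreal (potential t \<xi> + K) \<partial>paths)"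
  proof (rule nn_integral_PiM_mono_coordinate[OF prob_space_sample_distr finite_atMost])
    fix \<xi>
    define R where "R = (\<Sum>s\<in>{1..Suc t}. a (Suc t) s * gap \<xi> s)"
    have "R \<ge> 0" unfolding R_def using t gap_nonneg by (intro sum_nonneg mult_nonneg_nonneg a_nonneg) auto
    have "(\<integral>\<^sup>+q. ennreal (potential (Suc t) (\<xi>(Suc t := q))) \<partial>sample_distr)
        = (\<integral>\<^sup>+q. ennreal (R + w (Suc t) * (2 * \<tau> * (h (prox_step \<tau> (snd q) (fst q) (x_iter \<xi> (Suc t))) - h xs)
              + (norm (prox_step \<tau> (snd q) (fst q) (x_iter \<xi> (Suc t)) - z_avg \<xi> (Suc t)))\<^sup>2)) \<partial>sample_distr)"
      by (simp add: potential_fun_upd_self sample_step_def R_def)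
    also have "\<dots> \<le> ennreal (R + w (Suc t) * ((norm (x_iter \<xi> (Suc t) - z_avg \<xi> (Suc t)))\<^sup>2
        + 2 * \<tau> * (h (z_avg \<xi> (Suc t)) - h xs) + 8 * \<tau>\<^sup>2 * L * (h (x_iter \<xi> (Suc t)) - h xs)
        + \<tau>\<^sup>2 * noise_level))"
      by (rule expected_prox_step_inequality[OF tau_pos tau_L \<open>R \<ge> 0\<close> less_imp_le[OF w_pos]])
    also have "\<dots> \<le> ennreal (potential t \<xi> + K)"
      using potential_step_bound[OF t, of \<xi>] by (intro ennreal_leI) (simp add: R_def K_def gap_def)
    finally show "(\<integral>\<^sup>+q. ennreal (potential (Suc t) (\<xi>(Suc t := q))) \<partial>sample_distr)
      \<le> ennreal (potential t \<xi> + K)" .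
  qed (use t measurable_potential[of t] measurable_potential[of "Suc t"] potential_fun_upd_later in auto)
  also have "\<dots> = (\<integral>\<^sup>+\<xi>. ennreal (potential t \<xi>) + ennreal K \<partial>paths)"
    using potential_nonneg[of t] t K by (intro nn_integral_cong) (simp add: ennreal_plus)
  also have "\<dots> = (\<integral>\<^sup>+\<xi>. ennreal (potential t \<xi>) \<partial>paths) + ennreal K"
    using measurable_potential[of t] t prob_space.emeasure_space_1[OF prob_space_paths]
    by (subst nn_integral_add) auto
  finally show ?thesis by (simp add: K_def)
qed

lemma expected_potential_bound:
  "t \<le> T \<Longrightarrow> (\<integral>\<^sup>+\<xi>. ennreal (potential t \<xi>) \<partial>paths)
     \<le> ennreal (w 0 * ((norm (x0 - p))\<^sup>2 + 8 * \<tau>\<^sup>2 * L * (h x0 - h xs)) + \<tau>\<^sup>2 * noise_level * (\<Sum>s\<le>t. w s))"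
proof (induction t)
  case 0
  thus ?case using expected_potential_0 by simp
next
  case (Suc t)
  define B where "B t = w 0 * ((norm (x0 - p))\<^sup>2 + 8 * \<tau>\<^sup>2 * L * (h x0 - h xs)) + \<tau>\<^sup>2 * noise_level * (\<Sum>s\<le>t. w s)"
    for t
  have "0 \<le> B t"
    unfolding B_def using w_pos noise_level_nonneg h_min[of x0] L_pos
    by (intro add_nonneg_nonneg mult_nonneg_nonneg sum_nonneg) (auto intro: less_imp_le)
  have "(\<integral>\<^sup>+\<xi>. ennreal (potential (Suc t) \<xi>) \<partial>paths)
      \<le> (\<integral>\<^sup>+\<xi>. ennreal (potential t \<xi>) \<partial>paths) + ennreal (w (Suc t) * \<tau>\<^sup>2 * noise_level)"
    by (rule expected_potential_Suc[OF Suc.prems])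
  also have "\<dots> \<le> ennreal (B t) + ennreal (w (Suc t) * \<tau>\<^sup>2 * noise_level)"
    using Suc by (simp add: B_def add_right_mono)
  also have "\<dots> = ennreal (B (Suc t))"
    using \<open>0 \<le> B t\<close> w_pos[of "Suc t"] noise_level_nonneg
    by (simp add: B_def algebra_simps flip: ennreal_plus)
  finally show ?case by (simp add: B_def)
qed

lemma sum_w_eq_sum_v: "(\<Sum>s\<le>T. w s) = (\<Sum>j\<le>T. v j)"
  using sum.nat_diff_reindex[of "\<lambda>j. v j" "Suc T"]
  by (simp add: w_def lessThan_Suc_atMost)

lemma expected_last_gap:
  "(\<integral>\<^sup>+\<xi>. ennreal (gap \<xi> (Suc T)) \<partial>paths)
     \<le> ennreal ((v T * ((norm (x0 - p))\<^sup>2 + 8 * \<tau>\<^sup>2 * L * (h x0 - h xs)) + \<tau>\<^sup>2 * noise_level * (\<Sum>j\<le>T. v j))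
                / (2 * \<tau>))"
proof -
  have "ennreal (2 * \<tau>) * ennreal (gap \<xi> (Suc T)) \<le> ennreal (potential T \<xi>)" for \<xi>
  proof -
    have "0 \<le> (\<Sum>s\<in>{1..T}. a T s * gap \<xi> s)"
      using gap_nonneg by (intro sum_nonneg mult_nonneg_nonneg a_nonneg) auto
    hence "2 * \<tau> * gap \<xi> (Suc T) \<le> potential T \<xi>" unfolding potential_def w_T by simp
    thus ?thesis using tau_pos gap_nonneg by (simp add: ennreal_leI flip: ennreal_mult)
  qed
  hence "ennreal (2 * \<tau>) * (\<integral>\<^sup>+\<xi>. ennreal (gap \<xi> (Suc T)) \<partial>paths) \<le> (\<integral>\<^sup>+\<xi>. ennreal (potential T \<xi>) \<partial>paths)"
    by (simp add: nn_integral_mono flip: nn_integral_cmult)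
  also have "\<dots> \<le> ennreal (v T * ((norm (x0 - p))\<^sup>2 + 8 * \<tau>\<^sup>2 * L * (h x0 - h xs)) + \<tau>\<^sup>2 * noise_level * (\<Sum>j\<le>T. v j))"
    using expected_potential_bound[of T] by (simp only: sum_w_eq_sum_v) (simp add: w_def)
  also have "\<dots> = ennreal (2 * \<tau>) * ennreal ((v T * ((norm (x0 - p))\<^sup>2 + 8 * \<tau>\<^sup>2 * L * (h x0 - h xs))
      + \<tau>\<^sup>2 * noise_level * (\<Sum>j\<le>T. v j)) / (2 * \<tau>))"
    using tau_pos by (simp flip: ennreal_mult')
  finally show ?thesis
    using tau_pos by (subst (asm) ennreal_mult_le_mult_iff) auto
qed

lemma v_mult_Suc: "v j * (real j + 1) = (\<Prod>k\<in>{1..j}. 1 + eps / real k)"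
proof (induction j)
  case (Suc j)
  have "v (Suc j) * (real (Suc j) + 1) = (v j * (real j + 1)) * (1 + eps / real (Suc j))"
    by (simp add: v_Suc field_simps)
  with Suc.IH show ?case by simp
qed (simp add: v_def)

lemma v_le:
  assumes T: "T \<ge> 1" and \<tau>: "\<tau> = 1 / (5 * L * sqrt (real T))" and j: "j \<le> T"
  shows "v j \<le> 3 / (real j + 1)"
proof -
  have "\<tau> * L = 1 / (5 * sqrt (real T))" using L_pos by (simp add: \<tau>)
  hence "eps = 4 / (5 * sqrt (real T))" unfolding eps_def by (simp add: mult.assoc)
  have "harm j \<le> 5/4 * sqrt (real j)" by (rule harm_le_sqrt)
  also have "\<dots> \<le> 5/4 * sqrt (real T)" using j by simp
  finally have "eps * harm j \<le> eps * (5/4 * sqrt (real T))" using eps_nonneg by (rule mult_left_mono)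
  also have "\<dots> = 1" using T \<open>eps = _\<close> by simp
  finally have "v j * (real j + 1) \<le> exp 1"
    using prod_one_plus_le_exp_harm[OF eps_nonneg, of j] unfolding v_mult_Suc by (meson exp_le_cancel_iff order_trans)
  hence "v j * (real j + 1) \<le> 3" using exp_le by linarith
  thus ?thesis by (simp add: field_simps)
qed

lemma expected_last_gap_rate:
  assumes T: "T \<ge> 1" and \<tau>: "\<tau> = 1 / (5 * L * sqrt (real T))"
  shows "(\<integral>\<^sup>+\<xi>. ennreal (gap \<xi> (Suc T)) \<partial>paths)
     \<le> ennreal (10 / sqrt (real T) * (L * (norm (x0 - p))\<^sup>2 + 1 / sqrt (real T) * (h x0 - h xs)
         + (sigma2 + 4 * (real m)\<^sup>2 * Lg\<^sup>2) / L * (1 / real T + 4 * ln (real T + 1))))"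
proof -
  define S where "S = sigma2 + 4 * (real m)\<^sup>2 * Lg\<^sup>2"
  have "(\<Sum>j\<le>T. v j) \<le> (\<Sum>j\<le>T. 3 * (1 / (real j + 1)))"
    using v_le[OF T \<tau>] by (intro sum_mono) simp
  also have "\<dots> = 3 * harm (Suc T)" by (simp only: sum_distrib_left[symmetric] sum_inverse_Suc_eq_harm)
  also have "\<dots> \<le> 3 * (1 + ln (real T + 1))" using harm_le_one_plus_ln[of T] by (simp add: add.commute)
  finally have sum_v: "(\<Sum>j\<le>T. v j) \<le> 3 * (1 + ln (real T + 1))" .
  have "noise_level = 4 * S" by (simp add: noise_level_def S_def)
  hence "(v T * ((norm (x0 - p))\<^sup>2 + 8 * \<tau>\<^sup>2 * L * (h x0 - h xs)) + \<tau>\<^sup>2 * noise_level * (\<Sum>j\<le>T. v j)) / (2 * \<tau>)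
      = v T * (norm (x0 - p))\<^sup>2 / (2 * \<tau>) + v T * (8 * \<tau>\<^sup>2 * L * (h x0 - h xs)) / (2 * \<tau>)
        + \<tau>\<^sup>2 * (4 * S) * (\<Sum>j\<le>T. v j) / (2 * \<tau>)"
    by (simp add: distrib_left add_divide_distrib)
  also have "\<dots> \<le> 10 / sqrt (real T) * (L * (norm (x0 - p))\<^sup>2) + 10 / sqrt (real T) * (1 / sqrt (real T) * (h x0 - h xs))
        + 10 / sqrt (real T) * (S / L * (1 / real T + 4 * ln (real T + 1)))"
    using v_pos[of T] v_le[OF T \<tau> order_refl] h_min[of x0] sigma2_nonneg sum_v
    by (intro add_mono rate_distance_term[OF T L_pos \<tau>] rate_gap_term[OF T L_pos \<tau>] rate_noise_term[OF T L_pos \<tau>])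
      (auto simp: S_def)
  finally show ?thesis
    using expected_last_gap by (elim order_trans) (simp add: S_def ennreal_leI algebra_simps)
qed

end

section \<open>The convergence rate\<close>

context incremental_prox_problem
begin

lemma expected_last_iterate_bound:
  assumes T: "T \<ge> 1" and \<tau>: "\<tau> = 1 / (5 * L * sqrt (real T))"
  shows "(\<integral>\<^sup>+\<xi>. ennreal (h (iterates (sample_step \<tau>) x0 \<xi> (Suc T)) - h xs) \<partial>PiM {..T} (\<lambda>_. sample_distr))
     \<le> ennreal (10 / sqrt (real T) * (L * Inf ((\<lambda>x. (norm (x - x0))\<^sup>2) ` {x. \<forall>y. h x \<le> h y})
         + 1 / sqrt (real T) * (h x0 - h xs)
         + (sigma2 + 4 * (real m)\<^sup>2 * Lg\<^sup>2) / L * (1 / real T + 4 * ln (real T + 1))))"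
proof -
  have \<tau>_L: "0 < \<tau>" "\<tau> * L \<le> 1/5"
    using L_pos T by (auto simp: \<tau> field_simps)
  define K where "K = 10 / sqrt (real T) * (1 / sqrt (real T) * (h x0 - h xs)
    + (sigma2 + 4 * (real m)\<^sup>2 * Lg\<^sup>2) / L * (1 / real T + 4 * ln (real T + 1)))"
  define minimizers where "minimizers = {x. \<forall>y. h x \<le> h y}"
  have bound: "(\<integral>\<^sup>+\<xi>. ennreal (h (iterates (sample_step \<tau>) x0 \<xi> (Suc T)) - h xs) \<partial>PiM {..T} (\<lambda>_. sample_distr))
      \<le> ennreal (K + 10 / sqrt (real T) * L * d)"
    if "d \<in> (\<lambda>x. (norm (x - x0))\<^sup>2) ` minimizers" for d
  proof -
    from that obtain p where p: "\<And>y. h p \<le> h y" and d: "d = (norm (x0 - p))\<^sup>2"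
      by (auto simp: minimizers_def norm_minus_commute)
    interpret incremental_prox_lyapunov D f gradf F g m L Lg xs \<tau> T x0 p
      using p \<tau>_L
      by (intro incremental_prox_lyapunov.intro incremental_prox_problem_axioms incremental_prox_lyapunov_axioms.intro)
        (auto simp: h_def gsum_def)
    from expected_last_gap_rate[OF T \<tau>] show ?thesis
      by (simp add: gap_def x_iter_def d K_def algebra_simps)
  qed
  have "0 \<le> K" unfolding K_def using L_pos h_min[of x0] sigma2_nonneg by simp
  moreover have "(\<lambda>x. (norm (x - x0))\<^sup>2) ` minimizers \<noteq> {}" using h_min by (auto simp: minimizers_def)
  moreover have "0 < 10 / sqrt (real T) * L" using L_pos T by simp
  ultimately have "(\<integral>\<^sup>+\<xi>. ennreal (h (iterates (sample_step \<tau>) x0 \<xi> (Suc T)) - h xs) \<partial>PiM {..T} (\<lambda>_. sample_distr))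
      \<le> ennreal (K + 10 / sqrt (real T) * L * Inf ((\<lambda>x. (norm (x - x0))\<^sup>2) ` minimizers))"
    using bound by (intro le_ennreal_add_mult_Inf) auto
  thus ?thesis by (simp add: K_def minimizers_def algebra_simps)
qed

lemma nn_integral_rip_iter_eq_PiM:
  fixes M :: "'w measure" and I :: "nat \<Rightarrow> 'w \<Rightarrow> 'i" and J :: "nat \<Rightarrow> 'w \<Rightarrow> nat"
  assumes M: "prob_space M" and \<tau>: "\<tau> \<ge> 0"
    and indep: "prob_space.indep_vars M (\<lambda>t. sample_distr) (\<lambda>t \<omega>. (I t \<omega>, J t \<omega>)) {..T}"
    and distr: "\<And>t. t \<le> T \<Longrightarrow> distr M sample_distr (\<lambda>\<omega>. (I t \<omega>, J t \<omega>)) = sample_distr"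
  shows "(\<integral>\<^sup>+\<omega>. ennreal (h (rip_iter x0 \<tau> m gradf g (\<lambda>t. I t \<omega>) (\<lambda>t. J t \<omega>) (T + 1)) - h xs) \<partial>M)
     = (\<integral>\<^sup>+\<xi>. ennreal (h (iterates (sample_step \<tau>) x0 \<xi> (Suc T)) - h xs) \<partial>PiM {..T} (\<lambda>_. sample_distr))"
proof -
  interpret M: prob_space M by (rule M)
  have "AE \<omega> in M. J t \<omega> \<in> {1..m}" if "t \<le> T" for t
  proof -
    have meas: "(\<lambda>\<omega>. (I t \<omega>, J t \<omega>)) \<in> measurable M sample_distr"
      using indep that unfolding M.indep_vars_def by auto
    have "AE q in distr M sample_distr (\<lambda>\<omega>. (I t \<omega>, J t \<omega>)). snd q \<in> {1..m}"
      unfolding distr[OF that] by (rule AE_sample_index)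
    from AE_distrD[OF meas this] show ?thesis by simp
  qed
  hence "AE \<omega> in M. \<forall>t\<in>{..T}. J t \<omega> \<in> {1..m}"
    by (subst AE_finite_all) auto
  hence "AE \<omega> in M. ennreal (h (rip_iter x0 \<tau> m gradf g (\<lambda>t. I t \<omega>) (\<lambda>t. J t \<omega>) (T + 1)) - h xs)
      = ennreal (h (iterates (sample_step \<tau>) x0 (\<lambda>t\<in>{..T}. (I t \<omega>, J t \<omega>)) (Suc T)) - h xs)"
  proof eventually_elim
    case (elim \<omega>)
    hence "rip_iter x0 \<tau> m gradf g (\<lambda>t. I t \<omega>) (\<lambda>t. J t \<omega>) (Suc T)
        = iterates (sample_step \<tau>) x0 (\<lambda>t. (I t \<omega>, J t \<omega>)) (Suc T)"
      by (intro rip_iter_eq_iterates) auto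
    also have "\<dots> = iterates (sample_step \<tau>) x0 (\<lambda>t\<in>{..T}. (I t \<omega>, J t \<omega>)) (Suc T)"
      by (rule iterates_cong) auto
    finally show ?case by simp
  qed
  hence "(\<integral>\<^sup>+\<omega>. ennreal (h (rip_iter x0 \<tau> m gradf g (\<lambda>t. I t \<omega>) (\<lambda>t. J t \<omega>) (T + 1)) - h xs) \<partial>M)
      = (\<integral>\<^sup>+\<omega>. ennreal (h (iterates (sample_step \<tau>) x0 (\<lambda>t\<in>{..T}. (I t \<omega>, J t \<omega>)) (Suc T)) - h xs) \<partial>M)"
    by (rule nn_integral_cong_AE)
  also have "\<dots> = (\<integral>\<^sup>+\<xi>. ennreal (h (iterates (sample_step \<tau>) x0 \<xi> (Suc T)) - h xs) \<partial>PiM {..T} (\<lambda>_. sample_distr))"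
  proof (rule M.nn_integral_indep_identically_distributed[OF indep])
    show "(\<lambda>\<xi>. ennreal (h (iterates (sample_step \<tau>) x0 \<xi> (Suc T)) - h xs))
        \<in> borel_measurable (PiM {..T} (\<lambda>_. sample_distr))"
      using measurable_iterates_sample_step[OF \<tau>, of "Suc T" T x0] by measurable
  qed (use distr in auto)
  finally show ?thesis .
qed

end

theorem theorem4p1:
  fixes D :: "'i measure"
    and f :: "'i \<Rightarrow> 'a::euclidean_space \<Rightarrow> real"
    and gradf :: "'i \<Rightarrow> 'a \<Rightarrow> 'a"
    and F :: "'a \<Rightarrow> real"
    and g :: "nat \<Rightarrow> 'a \<Rightarrow> real"
    and m :: nat and L Lg :: real
    and x0 xs :: 'a
    and M :: "'w measure"
    and I :: "nat \<Rightarrow> 'w \<Rightarrow> 'i" and J :: "nat \<Rightarrow> 'w \<Rightarrow> nat"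
    and T :: nat
  assumes D_prob: "prob_space D"
    and L_pos: "L > 0"
    and f_convex: "\<And>i. i \<in> space D \<Longrightarrow> convex_on UNIV (f i)"
    and f_grad: "\<And>i x. i \<in> space D \<Longrightarrow> (f i has_derivative (\<lambda>v. gradf i x \<bullet> v)) (at x)"
    and f_lipschitz: "\<And>i x y. i \<in> space D \<Longrightarrow> norm (gradf i x - gradf i y) \<le> L * norm (x - y)"
    and gradf_meas: "(\<lambda>(i, x). gradf i x) \<in> borel_measurable (D \<Otimes>\<^sub>M borel)"
    and F_exp: "\<And>x. integrable D (\<lambda>i. f i x) \<and> F x = (\<integral>i. f i x \<partial>D)"
    and F_grad: "\<And>x. integrable D (\<lambda>i. gradf i x) \<and>
                  (F has_derivative (\<lambda>v. (\<integral>i. gradf i x \<partial>D) \<bullet> v)) (at x)"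
    and m_pos: "m \<ge> 1"
    and g_convex: "\<And>j. j \<in> {1..m} \<Longrightarrow> convex_on UNIV (g j)"
    and g_lsc: "\<And>j. j \<in> {1..m} \<Longrightarrow> lower_semicontinuous (g j)"
    and g_lipschitz: "\<And>j x y. j \<in> {1..m} \<Longrightarrow> \<bar>g j x - g j y\<bar> \<le> Lg * norm (x - y)"
    and xs_min: "\<And>y. F xs + (\<Sum>j=1..m. g j xs) \<le> F y + (\<Sum>j=1..m. g j y)"
    and sigma_fin: "integrable D (\<lambda>i. (norm (gradf i xs))^2)"
    and M_prob: "prob_space M"
    and indep: "prob_space.indep_vars M (\<lambda>t. D \<Otimes>\<^sub>M measure_pmf (pmf_of_set {1..m}))
                  (\<lambda>t \<omega>. (I t \<omega>, J t \<omega>)) {..T}"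
    and distr_IJ: "\<And>t. t \<le> T \<Longrightarrow>
                  distr M (D \<Otimes>\<^sub>M measure_pmf (pmf_of_set {1..m})) (\<lambda>\<omega>. (I t \<omega>, J t \<omega>))
                  = D \<Otimes>\<^sub>M measure_pmf (pmf_of_set {1..m})"
    and T_pos: "T \<ge> 1"
  shows
    "let h = (\<lambda>x. F x + (\<Sum>j=1..m. g j x));
         hstar = h xs;
         Xstar = {x. \<forall>y. h x \<le> h y};
         Dstar2 = Inf ((\<lambda>x. (norm (x - x0))^2) ` Xstar);
         sigma2 = (\<integral>i. (norm (gradf i xs))^2 \<partial>D);
         \<tau> = 1 / (5 * L * sqrt (real T))
     in (\<integral>\<^sup>+ \<omega>. ennreal (h (rip_iter x0 \<tau> m gradf g (\<lambda>t. I t \<omega>) (\<lambda>t. J t \<omega>) (T + 1)) - hstar) \<partial>M)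
        \<le> ennreal (10 / sqrt (real T) *
             (L * Dstar2 + 1 / sqrt (real T) * (h x0 - hstar)
              + (sigma2 + 4 * (real m)^2 * Lg^2) / L * (1 / real T + 4 * ln (real T + 1))))"
proof -
  interpret incremental_prox_problem D f gradf F g m L Lg xs
    by (rule incremental_prox_problem.intro[OF D_prob L_pos f_convex f_grad f_lipschitz gradf_meas F_exp
          F_grad m_pos g_convex g_lipschitz xs_min sigma_fin])
  have h: "(\<lambda>x. F x + (\<Sum>j=1..m. g j x)) = h" by (simp add: fun_eq_iff h_def gsum_def)
  define \<tau> where "\<tau> = 1 / (5 * L * sqrt (real T))"
  have "\<tau> \<ge> 0" using L_pos by (simp add: \<tau>_def)
  have "(\<integral>\<^sup>+\<omega>. ennreal (h (rip_iter x0 \<tau> m gradf g (\<lambda>t. I t \<omega>) (\<lambda>t. J t \<omega>) (T + 1)) - h xs) \<partial>M)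
      = (\<integral>\<^sup>+\<xi>. ennreal (h (iterates (sample_step \<tau>) x0 \<xi> (Suc T)) - h xs) \<partial>PiM {..T} (\<lambda>_. sample_distr))"
    by (rule nn_integral_rip_iter_eq_PiM[OF M_prob \<open>\<tau> \<ge> 0\<close> indep distr_IJ])
  also have "\<dots> \<le> ennreal (10 / sqrt (real T) * (L * Inf ((\<lambda>x. (norm (x - x0))\<^sup>2) ` {x. \<forall>y. h x \<le> h y})
         + 1 / sqrt (real T) * (h x0 - h xs)
         + (sigma2 + 4 * (real m)\<^sup>2 * Lg\<^sup>2) / L * (1 / real T + 4 * ln (real T + 1))))"
    by (rule expected_last_iterate_bound[OF T_pos \<tau>_def])
  finally show ?thesis unfolding Let_def h \<tau>_def sigma2_def .
qed

end
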